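(* Let $k\ge0$ and assume $\mu,\beta\in C^k(\mathbb R^N,L^\infty_+(0,a_2))$, with $\underline\beta$ not a.e. zero on $(0,a_2)$. For $x\in\mathbb R^N$ let $\alpha(x)$ be the unique real number with $\int_0^{a_2}\beta(a,x)e^{-\alpha(x)a}\pi(0,a,x)da=1$ and $\phi(a,x)=e^{-\alpha(x)a}\pi(0,a,x)$, so that $(0,\phi(\cdot,x))$ is the principal eigenvector of $A(x)+F(x)$ for the eigenvalue $\alpha(x)$, normalized by $\int_0^{a_2}\beta(a,x)\phi(a,x)da=1$. Then the map $x\mapsto\big((0,\phi(\cdot,x)),\alpha(x)\big)$ is of class $C^k$ from $\mathbb R^N$ into $\{0\}\times C([0,a_2])\times\mathbb R$.
   Context: $a_2>0$ is a finite age, $\pi(\tau,a,x)=\exp(-\int_\tau^a\mu(s,x)ds)$, and $\underline\beta(a)=\inf_{x}\beta(a,x)$ over the relevant points with $\underline\beta\le\beta(\cdot,x)$ for all $x\in\mathbb R^N$. For $x\in\mathbb R^N$, $A(x):\{0\}\times W^{1,1}(0,a_2)\to\mathbb R\times L^1(0,a_2)$, $A(x)(0,u)=(-u(0),-\partial_au-\mu(\cdot,x)u)$, and $F(x)(0,u)=(\int_0^{a_2}\beta(a,x)u(a)da,0)$. *)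

theory Defs
  imports "HOL-Analysis.Analysis" "HOL-Probability.Essential_Supremum" "HOL-Library.Function_Algebras"
begin

instantiation "fun" :: (type, real_vector) real_vector
begin
definition scaleR_fun_def: "scaleR r f = (\<lambda>x. r *\<^sub>R f x)"
instance
  by standard (simp_all add: scaleR_fun_def fun_eq_iff scaleR_add_right scaleR_add_left)
end

text \<open>C^k maps from R^N into a (semi)normed function space, given by a membership
  predicate S and a (semi)norm nrm.\<close>

fun Ck_wrt :: "('v::real_vector \<Rightarrow> bool) \<Rightarrow> ('v \<Rightarrow> real) \<Rightarrow> nat \<Rightarrow> (real^'n \<Rightarrow> 'v) \<Rightarrow> bool" where
  "Ck_wrt S nrm 0 f \<longleftrightarrow>
     (\<forall>x. S (f x)) \<and> (\<forall>x. ((\<lambda>y. nrm (f y - f x)) \<longlongrightarrow> 0) (at x))"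
| "Ck_wrt S nrm (Suc k) f \<longleftrightarrow>
     (\<forall>x. S (f x)) \<and>
     (\<exists>D :: 'n \<Rightarrow> real^'n \<Rightarrow> 'v.
        (\<forall>i x. S (D i x)) \<and>
        (\<forall>x. ((\<lambda>y. nrm (f y - f x - (\<Sum>i\<in>UNIV. ((y - x) $ i) *\<^sub>R D i x)) / norm (y - x))
                 \<longlongrightarrow> 0) (at x)) \<and>
        (\<forall>i. Ck_wrt S nrm k (D i)))"

definition Linf_mem :: "real \<Rightarrow> (real \<Rightarrow> real) \<Rightarrow> bool" where
  "Linf_mem a2 u \<longleftrightarrow> u \<in> borel_measurable (lebesgue_on {0<..<a2}) \<and>
     esssup (lebesgue_on {0<..<a2}) (\<lambda>a. ereal \<bar>u a\<bar>) < \<infinity>"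

definition Linf_nrm :: "real \<Rightarrow> (real \<Rightarrow> real) \<Rightarrow> real" where
  "Linf_nrm a2 u = real_of_ereal (esssup (lebesgue_on {0<..<a2}) (\<lambda>a. ereal \<bar>u a\<bar>))"

definition Linf_plus :: "real \<Rightarrow> (real \<Rightarrow> real) \<Rightarrow> bool" where
  "Linf_plus a2 u \<longleftrightarrow> Linf_mem a2 u \<and> (AE a in lebesgue_on {0<..<a2}. u a \<ge> 0)"

text \<open>Target space {0} x C([0,a2]) x R (the trivial first factor is dropped).\<close>

definition CR_mem :: "real \<Rightarrow> (real \<Rightarrow> real) \<times> real \<Rightarrow> bool" where
  "CR_mem a2 p \<longleftrightarrow> continuous_on {0..a2} (fst p)"

definition CR_nrm :: "real \<Rightarrow> (real \<Rightarrow> real) \<times> real \<Rightarrow> real" where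
  "CR_nrm a2 p = max (SUP a\<in>{0..a2}. \<bar>fst p a\<bar>) \<bar>snd p\<bar>"

definition surv :: "(real^'n \<Rightarrow> real \<Rightarrow> real) \<Rightarrow> real \<Rightarrow> real \<Rightarrow> real^'n \<Rightarrow> real" where
  "surv mu \<tau> a x = exp (- (LINT s:{\<tau>..a}|lebesgue. mu x s))"

end

theory Submission
  imports Defs
begin

text \<open>
  With the survival probability w(x) = exp(-int_0^a mu(s,x) ds) and the Laplace transform
  G(u,r) = int_0^a2 u(a) e^(-ra) da on (0,a2), alpha(x) is the root of G(beta(x) w(x), alpha) = 1
  and phi(x) = e^(-alpha(x) a) w(x).
  Bounded linear and bilinear maps between L-infinity(0,a2), C([0,a2]) and the reals, as well as
  the pointwise exponential on C([0,a2]), preserve C^k; hence x |-> w(x) and p = beta w are C^k.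
  G is strictly decreasing in r with d/dr G(u,r) = -G(a u, r) < 0, and Lipschitz in u, so a
  direct implicit function argument shows that alpha is continuous and differentiable with
  partial derivatives G(D_i p, alpha) / G(a p, alpha). This formula lifts alpha from C^j to
  C^(j+1) for j < k. Finally phi is a product of C^k maps.
\<close>

section \<open>Seminormed subspaces and the C^k calculus\<close>

definition seminormed_subspace :: "('v::real_vector \<Rightarrow> bool) \<Rightarrow> ('v \<Rightarrow> real) \<Rightarrow> bool" where
  "seminormed_subspace S n \<longleftrightarrow> S 0 \<and> (\<forall>u v. S u \<longrightarrow> S v \<longrightarrow> S (u + v)) \<and> (\<forall>r u. S u \<longrightarrow> S (r *\<^sub>R u))
     \<and> (\<forall>u. S u \<longrightarrow> 0 \<le> n u) \<and> (\<forall>u v. S u \<longrightarrow> S v \<longrightarrow> n (u + v) \<le> n u + n v)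
     \<and> (\<forall>r u. S u \<longrightarrow> n (r *\<^sub>R u) \<le> \<bar>r\<bar> * n u)"

context
  fixes S :: "'v::real_vector \<Rightarrow> bool" and n :: "'v \<Rightarrow> real"
  assumes ss: "seminormed_subspace S n"
begin

lemma seminormed_zero: "S 0"
  and seminormed_add: "S u \<Longrightarrow> S v \<Longrightarrow> S (u + v)"
  and seminormed_scaleR: "S u \<Longrightarrow> S (r *\<^sub>R u)"
  and seminormed_nonneg: "S u \<Longrightarrow> 0 \<le> n u"
  and seminormed_triangle: "S u \<Longrightarrow> S v \<Longrightarrow> n (u + v) \<le> n u + n v"
  and seminormed_scaleR_le: "S u \<Longrightarrow> n (r *\<^sub>R u) \<le> \<bar>r\<bar> * n u"
  using ss unfolding seminormed_subspace_def by simp_all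

lemma seminormed_uminus: "S u \<Longrightarrow> S (- u)"
  using seminormed_scaleR[of u "-1"] by simp

lemma seminormed_diff: "S u \<Longrightarrow> S v \<Longrightarrow> S (u - v)"
  using seminormed_add[of u "- v"] seminormed_uminus[of v] by simp

lemma seminormed_zero_eq: "n 0 = 0"
  using seminormed_scaleR_le[OF seminormed_zero, of 0] seminormed_nonneg[OF seminormed_zero] by simp

lemma seminormed_sum: "finite A \<Longrightarrow> (\<And>i. i \<in> A \<Longrightarrow> S (f i)) \<Longrightarrow> S (\<Sum>i\<in>A. f i)"
  by (induction A rule: finite_induct) (simp_all add: seminormed_zero seminormed_add)

lemma seminormed_sum_le: "finite A \<Longrightarrow> (\<And>i. i \<in> A \<Longrightarrow> S (f i)) \<Longrightarrow> n (\<Sum>i\<in>A. f i) \<le> (\<Sum>i\<in>A. n (f i))"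
proof (induction A rule: finite_induct)
  case (insert x F)
  have "n (f x + sum f F) \<le> n (f x) + n (sum f F)"
    using insert.prems seminormed_sum[OF insert.hyps(1), of f] by (intro seminormed_triangle) auto
  then show ?case using insert by simp
qed (simp add: seminormed_zero_eq)

lemma seminormed_linear_part: "(\<And>i. S (D i)) \<Longrightarrow> S (\<Sum>i\<in>UNIV. (h $ i) *\<^sub>R D i)"
  by (intro seminormed_sum seminormed_scaleR) auto

lemma seminormed_linear_part_le:
  assumes "\<And>i. S (D i)"
  shows "n (\<Sum>i\<in>UNIV. (h $ i) *\<^sub>R D i) \<le> norm h * (\<Sum>i\<in>UNIV. n (D i))"
proof -
  have "n (\<Sum>i\<in>UNIV. (h $ i) *\<^sub>R D i) \<le> (\<Sum>i\<in>UNIV. n ((h $ i) *\<^sub>R D i))"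
    using assms by (intro seminormed_sum_le seminormed_scaleR) auto
  also have "\<dots> \<le> (\<Sum>i\<in>UNIV. norm h * n (D i))"
  proof (rule sum_mono)
    fix i
    have "n ((h $ i) *\<^sub>R D i) \<le> \<bar>h $ i\<bar> * n (D i)" using seminormed_scaleR_le assms by blast
    also have "\<dots> \<le> norm h * n (D i)"
      using assms by (intro mult_right_mono component_le_norm_cart seminormed_nonneg)
    finally show "n ((h $ i) *\<^sub>R D i) \<le> norm h * n (D i)" .
  qed
  finally show ?thesis by (simp add: sum_distrib_left)
qed

end

definition deriv_remainder ::
    "(real^'n \<Rightarrow> 'v::real_vector) \<Rightarrow> ('n \<Rightarrow> real^'n \<Rightarrow> 'v) \<Rightarrow> real^'n \<Rightarrow> real^'n \<Rightarrow> 'v" where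
  "deriv_remainder f D x y = f y - f x - (\<Sum>i\<in>UNIV. ((y - x) $ i) *\<^sub>R D i x)"

lemma Ck_wrt_Suc_iff:
  "Ck_wrt S n (Suc k) f \<longleftrightarrow> (\<forall>x. S (f x)) \<and> (\<exists>D. (\<forall>i x. S (D i x)) \<and>
     (\<forall>x. ((\<lambda>y. n (deriv_remainder f D x y) / norm (y - x)) \<longlongrightarrow> 0) (at x)) \<and> (\<forall>i. Ck_wrt S n k (D i)))"
  by (simp add: deriv_remainder_def)

declare Ck_wrt.simps(2)[simp del]

abbreviation Ck_real :: "nat \<Rightarrow> (real^'n \<Rightarrow> real) \<Rightarrow> bool" where
  "Ck_real \<equiv> Ck_wrt (\<lambda>_. True) abs"

lemma seminormed_subspace_real: "seminormed_subspace (\<lambda>_. True) (abs :: real \<Rightarrow> real)"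
  unfolding seminormed_subspace_def by (auto simp: abs_mult)

lemma Ck_wrt_mem: "Ck_wrt S n k f \<Longrightarrow> S (f x)"
  by (cases k) (auto simp: Ck_wrt_Suc_iff)

lemma deriv_remainder_mem:
  "seminormed_subspace S n \<Longrightarrow> S (f y) \<Longrightarrow> S (f x) \<Longrightarrow> (\<And>i. S (D i x)) \<Longrightarrow> S (deriv_remainder f D x y)"
  unfolding deriv_remainder_def by (intro seminormed_diff[of S n] seminormed_linear_part[of S n]) auto

lemma deriv_remainder_increment_le:
  assumes ss: "seminormed_subspace S n" and Sf: "\<And>y. S (f y)" and SD: "\<And>i. S (D i x)"
  shows "n (f y - f x) \<le> n (deriv_remainder f D x y) + norm (y - x) * (\<Sum>i\<in>UNIV. n (D i x))"
proof -
  have "f y - f x = deriv_remainder f D x y + (\<Sum>i\<in>UNIV. ((y - x) $ i) *\<^sub>R D i x)"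
    by (simp add: deriv_remainder_def)
  then have "n (f y - f x) \<le> n (deriv_remainder f D x y) + n (\<Sum>i\<in>UNIV. ((y - x) $ i) *\<^sub>R D i x)"
    using seminormed_triangle[OF ss deriv_remainder_mem[of S n f y x D, OF ss Sf Sf SD]
        seminormed_linear_part[of S n "\<lambda>i. D i x" "y - x", OF ss SD]] by metis
  also have "\<dots> \<le> n (deriv_remainder f D x y) + norm (y - x) * (\<Sum>i\<in>UNIV. n (D i x))"
    using seminormed_linear_part_le[of S n "\<lambda>i. D i x" "y - x", OF ss SD] by simp
  finally show ?thesis .
qed

lemma sandwich_zero:
  assumes "\<forall>\<^sub>F y in F. 0 \<le> f y" "\<forall>\<^sub>F y in F. f y \<le> g y" "(g \<longlongrightarrow> 0) F"
  shows "(f \<longlongrightarrow> (0::real)) F"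
  using tendsto_sandwich[OF assms(1,2) tendsto_const assms(3)] .

lemma tendsto_remainder_over_norm:
  assumes "seminormed_subspace S n" "\<And>y. S (R y)"
    and "\<forall>\<^sub>F y in at x. n (R y) / norm (y - x) \<le> g y" "(g \<longlongrightarrow> 0) (at x)"
  shows "((\<lambda>y. n (R y) / norm (y - x)) \<longlongrightarrow> 0) (at x)"
proof (rule sandwich_zero)
  show "\<forall>\<^sub>F y in at x. 0 \<le> n (R y) / norm (y - x)"
    using seminormed_nonneg[OF assms(1,2)] by simp
qed (use assms(3,4) in auto)

lemma Ck_wrt_continuous:
  assumes ss: "seminormed_subspace S n" and f: "Ck_wrt S n k f"
  shows "((\<lambda>y. n (f y - f x)) \<longlongrightarrow> 0) (at x)"
proof (cases k)
  case 0 then show ?thesis using f by simp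
next
  case (Suc m)
  then obtain D where Sf: "\<And>x. S (f x)" and SD: "\<And>i. S (D i x)"
    and R: "((\<lambda>y. n (deriv_remainder f D x y) / norm (y - x)) \<longlongrightarrow> 0) (at x)"
    using f[unfolded Suc Ck_wrt_Suc_iff] by blast
  let ?C = "\<Sum>i\<in>UNIV. n (D i x)"
  have bound: "n (f y - f x) \<le> n (deriv_remainder f D x y) / norm (y - x) * norm (y - x) + norm (y - x) * ?C"
    if "y \<noteq> x" for y
    using deriv_remainder_increment_le[of S n f D x y, OF ss Sf SD] that by simp
  let ?B = "\<lambda>y. n (deriv_remainder f D x y) / norm (y - x) * norm (y - x) + norm (y - x) * ?C"
  have N: "((\<lambda>y. norm (y - x)) \<longlongrightarrow> 0) (at x)"
    by (intro tendsto_norm_zero LIM_zero tendsto_ident_at)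
  have "(?B \<longlongrightarrow> 0 * 0 + 0 * ?C) (at x)"
    by (rule tendsto_add[OF tendsto_mult[OF R N] tendsto_mult[OF N tendsto_const]])
  then have lim: "(?B \<longlongrightarrow> 0) (at x)" by simp
  have upper: "\<forall>\<^sub>F y in at x. n (f y - f x) \<le> ?B y"
    unfolding eventually_at_filter by (intro always_eventually) (use bound in blast)
  have "\<forall>\<^sub>F y in at x. 0 \<le> n (f y - f x)"
    using seminormed_nonneg[OF ss seminormed_diff[OF ss Sf Sf]] by simp
  then show ?thesis by (rule sandwich_zero[OF _ upper lim])
qed

lemma Ck_wrt_Suc_imp: "seminormed_subspace S n \<Longrightarrow> Ck_wrt S n (Suc k) f \<Longrightarrow> Ck_wrt S n k f"
proof (induction k arbitrary: f)
  case 0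
  then show ?case using Ck_wrt_continuous[OF 0(1,2)] Ck_wrt_mem[OF 0(2)] by simp
next
  case (Suc k)
  then show ?case unfolding Ck_wrt_Suc_iff[of S n "Suc k" f] Ck_wrt_Suc_iff[of S n k f] by blast
qed

lemma Ck_wrt_mono: "seminormed_subspace S n \<Longrightarrow> Ck_wrt S n k f \<Longrightarrow> j \<le> k \<Longrightarrow> Ck_wrt S n j f"
  by (induction k) (auto simp: le_Suc_eq dest: Ck_wrt_Suc_imp)

lemma Ck_wrt_const:
  assumes ss: "seminormed_subspace S n" and c: "S c"
  shows "Ck_wrt S n k (\<lambda>x. c)"
  using c
proof (induction k arbitrary: c)
  case 0
  then show ?case by (simp add: seminormed_zero_eq[OF ss])
next
  case (Suc k)
  show ?case unfolding Ck_wrt_Suc_iff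
    by (intro conjI exI[of _ "\<lambda>i x. 0"] allI)
      (simp_all add: Suc seminormed_zero[OF ss] seminormed_zero_eq[OF ss] deriv_remainder_def)
qed

lemma deriv_remainder_add:
  "deriv_remainder (\<lambda>x. f x + g x) (\<lambda>i x. Df i x + Dg i x) x y
     = deriv_remainder f Df x y + deriv_remainder g Dg x y"
  by (simp only: deriv_remainder_def scaleR_add_right sum.distrib)
    (simp add: algebra_simps del: vector_minus_component)

lemma Ck_wrt_add:
  assumes ss: "seminormed_subspace S n"
  shows "Ck_wrt S n k f \<Longrightarrow> Ck_wrt S n k g \<Longrightarrow> Ck_wrt S n k (\<lambda>x. f x + g x)"
proof (induction k arbitrary: f g)
  case 0
  have Sf: "\<And>y. S (f y)" and Sg: "\<And>y. S (g y)" using 0 by auto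
  show ?case unfolding Ck_wrt.simps
  proof (intro conjI allI)
    fix x
    show "S (f x + g x)" using seminormed_add[OF ss Sf Sg] .
    show "((\<lambda>y. n (f y + g y - (f x + g x))) \<longlongrightarrow> 0) (at x)"
    proof (rule sandwich_zero)
      show "\<forall>\<^sub>F y in at x. 0 \<le> n (f y + g y - (f x + g x))"
        using Sf Sg by (auto intro!: always_eventually seminormed_nonneg[OF ss] seminormed_diff[OF ss] seminormed_add[OF ss])
      have "n (f y + g y - (f x + g x)) \<le> n (f y - f x) + n (g y - g x)" for y
        using seminormed_triangle[OF ss seminormed_diff[OF ss Sf Sf] seminormed_diff[OF ss Sg Sg], of y x y x]
        by (simp add: algebra_simps)
      then show "\<forall>\<^sub>F y in at x. n (f y + g y - (f x + g x)) \<le> n (f y - f x) + n (g y - g x)"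
        by simp
      show "((\<lambda>y. n (f y - f x) + n (g y - g x)) \<longlongrightarrow> 0) (at x)"
        using tendsto_add[OF Ck_wrt_continuous[OF ss 0(1)] Ck_wrt_continuous[OF ss 0(2)]] by simp
    qed
  qed
next
  case (Suc k)
  from Suc.prems(1)[unfolded Ck_wrt_Suc_iff] obtain Df where f: "\<forall>x. S (f x)" "\<forall>i x. S (Df i x)"
    "\<forall>x. ((\<lambda>y. n (deriv_remainder f Df x y) / norm (y - x)) \<longlongrightarrow> 0) (at x)" "\<forall>i. Ck_wrt S n k (Df i)"
    by blast
  from Suc.prems(2)[unfolded Ck_wrt_Suc_iff] obtain Dg where g: "\<forall>x. S (g x)" "\<forall>i x. S (Dg i x)"
    "\<forall>x. ((\<lambda>y. n (deriv_remainder g Dg x y) / norm (y - x)) \<longlongrightarrow> 0) (at x)" "\<forall>i. Ck_wrt S n k (Dg i)"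
    by blast
  show ?case unfolding Ck_wrt_Suc_iff
  proof (intro conjI exI[of _ "\<lambda>i x. Df i x + Dg i x"] allI)
    fix x i
    show "S (f x + g x)" "S (Df i x + Dg i x)" using f g seminormed_add[OF ss] by simp_all
    show "Ck_wrt S n k (\<lambda>x. Df i x + Dg i x)" using Suc.IH f(4) g(4) by blast
  next
    fix x
    have Sr: "S (deriv_remainder f Df x y)" "S (deriv_remainder g Dg x y)" for y
      using f g by (auto intro!: deriv_remainder_mem[OF ss])
    show "((\<lambda>y. n (deriv_remainder (\<lambda>x. f x + g x) (\<lambda>i x. Df i x + Dg i x) x y) / norm (y - x)) \<longlongrightarrow> 0) (at x)"
      unfolding deriv_remainder_add
    proof (rule tendsto_remainder_over_norm[OF ss])
      show "S (deriv_remainder f Df x y + deriv_remainder g Dg x y)" for y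
        using seminormed_add[OF ss Sr] .
      show "\<forall>\<^sub>F y in at x. n (deriv_remainder f Df x y + deriv_remainder g Dg x y) / norm (y - x)
             \<le> n (deriv_remainder f Df x y) / norm (y - x) + n (deriv_remainder g Dg x y) / norm (y - x)"
        using seminormed_triangle[OF ss Sr]
        by (auto intro!: always_eventually simp: add_divide_distrib[symmetric] divide_right_mono)
      show "((\<lambda>y. n (deriv_remainder f Df x y) / norm (y - x) + n (deriv_remainder g Dg x y) / norm (y - x))
              \<longlongrightarrow> 0) (at x)"
        using tendsto_add[OF f(3)[rule_format, of x] g(3)[rule_format, of x]] by simp
    qed
  qed
qed

definition linear_on :: "('u::real_vector \<Rightarrow> bool) \<Rightarrow> ('u \<Rightarrow> 'w::real_vector) \<Rightarrow> bool" where
  "linear_on S T \<longleftrightarrow>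
     (\<forall>u v. S u \<longrightarrow> S v \<longrightarrow> T (u + v) = T u + T v) \<and> (\<forall>r u. S u \<longrightarrow> T (r *\<^sub>R u) = r *\<^sub>R T u)"

lemma linear_onI:
  "(\<And>u v. S u \<Longrightarrow> S v \<Longrightarrow> T (u + v) = T u + T v) \<Longrightarrow> (\<And>r u. S u \<Longrightarrow> T (r *\<^sub>R u) = r *\<^sub>R T u)
    \<Longrightarrow> linear_on S T"
  unfolding linear_on_def by blast

lemma linear_on_add: "linear_on S T \<Longrightarrow> S u \<Longrightarrow> S v \<Longrightarrow> T (u + v) = T u + T v"
  and linear_on_scaleR: "linear_on S T \<Longrightarrow> S u \<Longrightarrow> T (r *\<^sub>R u) = r *\<^sub>R T u"
  unfolding linear_on_def by simp_all

lemma linear_on_diff: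
  "seminormed_subspace S n \<Longrightarrow> linear_on S T \<Longrightarrow> S u \<Longrightarrow> S v \<Longrightarrow> T (u - v) = T u - T v"
  using linear_on_add[of S T u "- v"] linear_on_scaleR[of S T v "-1"] seminormed_uminus[of S n v] by simp

lemma linear_on_sum:
  assumes ss: "seminormed_subspace S n" and T: "linear_on S T"
  shows "finite A \<Longrightarrow> (\<And>i. i \<in> A \<Longrightarrow> S (f i)) \<Longrightarrow> T (\<Sum>i\<in>A. f i) = (\<Sum>i\<in>A. T (f i))"
proof (induction A rule: finite_induct)
  case empty
  then show ?case using linear_on_scaleR[OF T seminormed_zero[OF ss], of 0] by simp
next
  case (insert x F)
  then show ?case using linear_on_add[OF T, of "f x" "sum f F"] seminormed_sum[OF ss insert(1), of f] by simp
qed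

lemma deriv_remainder_linear_on:
  assumes ss: "seminormed_subspace S n" and T: "linear_on S T" and Sf: "\<And>x. S (f x)" and SD: "\<And>i. S (D i x)"
  shows "deriv_remainder (\<lambda>x. T (f x)) (\<lambda>i x. T (D i x)) x y = T (deriv_remainder f D x y)"
proof -
  have L: "T (\<Sum>i\<in>UNIV. ((y - x) $ i) *\<^sub>R D i x) = (\<Sum>i\<in>UNIV. ((y - x) $ i) *\<^sub>R T (D i x))"
    using linear_on_sum[OF ss T, of UNIV "\<lambda>i. ((y - x) $ i) *\<^sub>R D i x"] linear_on_scaleR[OF T SD]
    by (simp add: seminormed_scaleR[OF ss SD])
  have "T (deriv_remainder f D x y) = T (f y - f x) - T (\<Sum>i\<in>UNIV. ((y - x) $ i) *\<^sub>R D i x)"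
    unfolding deriv_remainder_def
    by (rule linear_on_diff[OF ss T seminormed_diff[OF ss Sf Sf] seminormed_linear_part[of S n "\<lambda>i. D i x", OF ss SD]])
  also have "\<dots> = T (f y) - T (f x) - (\<Sum>i\<in>UNIV. ((y - x) $ i) *\<^sub>R T (D i x))"
    unfolding L linear_on_diff[OF ss T Sf Sf] ..
  finally show ?thesis unfolding deriv_remainder_def by simp
qed

lemma Ck_wrt_bounded_linear:
  assumes ss1: "seminormed_subspace S1 n1" and ss2: "seminormed_subspace S2 n2" and T: "linear_on S1 T"
    and TS: "\<And>u. S1 u \<Longrightarrow> S2 (T u)" and Tb: "\<And>u. S1 u \<Longrightarrow> n2 (T u) \<le> K * n1 u"
  shows "Ck_wrt S1 n1 k f \<Longrightarrow> Ck_wrt S2 n2 k (\<lambda>x. T (f x))"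
proof (induction k arbitrary: f)
  case 0
  have Sf: "\<And>y. S1 (f y)" using 0 by simp
  show ?case unfolding Ck_wrt.simps
  proof (intro conjI allI)
    fix x
    show "S2 (T (f x))" using TS Sf by simp
    show "((\<lambda>y. n2 (T (f y) - T (f x))) \<longlongrightarrow> 0) (at x)"
    proof (rule sandwich_zero)
      show "\<forall>\<^sub>F y in at x. 0 \<le> n2 (T (f y) - T (f x))"
        using seminormed_nonneg[OF ss2 seminormed_diff[OF ss2 TS[OF Sf] TS[OF Sf]]] by simp
      show "\<forall>\<^sub>F y in at x. n2 (T (f y) - T (f x)) \<le> K * n1 (f y - f x)"
        using Tb[OF seminormed_diff[OF ss1 Sf Sf]] linear_on_diff[OF ss1 T Sf Sf] by (intro always_eventually allI) simp
      show "((\<lambda>y. K * n1 (f y - f x)) \<longlongrightarrow> 0) (at x)"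
        using tendsto_mult[OF tendsto_const Ck_wrt_continuous[OF ss1 0]] by simp
    qed
  qed
next
  case (Suc k)
  from Suc.prems(1)[unfolded Ck_wrt_Suc_iff] obtain D where f: "\<forall>x. S1 (f x)" "\<forall>i x. S1 (D i x)"
    "\<forall>x. ((\<lambda>y. n1 (deriv_remainder f D x y) / norm (y - x)) \<longlongrightarrow> 0) (at x)" "\<forall>i. Ck_wrt S1 n1 k (D i)"
    by blast
  show ?case unfolding Ck_wrt_Suc_iff
  proof (intro conjI exI[of _ "\<lambda>i x. T (D i x)"] allI)
    fix x i
    show "S2 (T (f x))" "S2 (T (D i x))" using f TS by simp_all
    show "Ck_wrt S2 n2 k (\<lambda>x. T (D i x))" using f(4) by (intro Suc.IH) simp
  next
    fix x
    have Sf: "\<And>x. S1 (f x)" and SD: "\<And>i x. S1 (D i x)" using f by auto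
    have Sr: "S1 (deriv_remainder f D x y)" for y
      using Sf SD by (intro deriv_remainder_mem[OF ss1])
    show "((\<lambda>y. n2 (deriv_remainder (\<lambda>x. T (f x)) (\<lambda>i x. T (D i x)) x y) / norm (y - x)) \<longlongrightarrow> 0) (at x)"
      unfolding deriv_remainder_linear_on[OF ss1 T Sf SD]
    proof (rule tendsto_remainder_over_norm[OF ss2 TS[OF Sr]])
      show "\<forall>\<^sub>F y in at x. n2 (T (deriv_remainder f D x y)) / norm (y - x)
             \<le> K * (n1 (deriv_remainder f D x y) / norm (y - x))"
        using divide_right_mono[OF Tb[OF Sr] norm_ge_zero] by (intro always_eventually allI) simp
      show "((\<lambda>y. K * (n1 (deriv_remainder f D x y) / norm (y - x))) \<longlongrightarrow> 0) (at x)"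
        using tendsto_mult[OF tendsto_const f(3)[rule_format, of x]] by simp
    qed
  qed
qed

lemma bilinear_sum_scaleR_left:
  assumes "bilinear B" shows "B (\<Sum>i\<in>A. c i *\<^sub>R u i) v = (\<Sum>i\<in>A. c i *\<^sub>R B (u i) v)"
proof -
  have l: "linear (\<lambda>u. B u v)" using assms by (simp add: bilinear_def)
  show ?thesis by (simp add: linear_sum[OF l] bilinear_lmul[OF assms])
qed

lemma bilinear_sum_scaleR_right:
  assumes "bilinear B" shows "B v (\<Sum>i\<in>A. c i *\<^sub>R u i) = (\<Sum>i\<in>A. c i *\<^sub>R B v (u i))"
proof -
  have l: "linear (\<lambda>u. B v u)" using assms by (simp add: bilinear_def)
  show ?thesis by (simp add: linear_sum[OF l] bilinear_rmul[OF assms])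
qed

lemma bilinear_remainder_le:
  assumes ss1: "seminormed_subspace S1 n1" and ss2: "seminormed_subspace S2 n2"
    and ss3: "seminormed_subspace S3 n3" and B: "bilinear B"
    and BS: "\<And>u v. S1 u \<Longrightarrow> S2 v \<Longrightarrow> S3 (B u v)"
    and Bb: "\<And>u v. S1 u \<Longrightarrow> S2 v \<Longrightarrow> n3 (B u v) \<le> K * n1 u * n2 v" and K: "0 \<le> K"
    and S: "S1 fx" "S1 fy" "S1 L" "S2 gx" "S2 gy" "S2 Lg"
  shows "n3 (B fy gy - B fx gx - (B L gx + B fx Lg))
    \<le> K * n1 (fy - fx - L) * (n2 gx + n2 (gy - gx)) + K * n1 L * n2 (gy - gx) + K * n1 fx * n2 (gy - gx - Lg)"
proof -
  have Sf: "S1 (fy - fx - L)" and Sdg: "S2 (gy - gx)" and Sg: "S2 (gy - gx - Lg)"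
    using S by (simp_all add: seminormed_diff[OF ss1] seminormed_diff[OF ss2])
  have eq: "B fy gy - B fx gx - (B L gx + B fx Lg) = B (fy - fx - L) gy + B L (gy - gx) + B fx (gy - gx - Lg)"
    by (simp add: bilinear_lsub[OF B] bilinear_rsub[OF B] bilinear_ladd[OF B] bilinear_radd[OF B] algebra_simps)
  have "n3 (B fy gy - B fx gx - (B L gx + B fx Lg))
      \<le> n3 (B (fy - fx - L) gy) + n3 (B L (gy - gx)) + n3 (B fx (gy - gx - Lg))"
    unfolding eq using seminormed_triangle[OF ss3 seminormed_add[OF ss3 BS[OF Sf S(5)] BS[OF S(3) Sdg]] BS[OF S(1) Sg]]
      seminormed_triangle[OF ss3 BS[OF Sf S(5)] BS[OF S(3) Sdg]] by linarith
  also have "\<dots> \<le> K * n1 (fy - fx - L) * n2 gy + K * n1 L * n2 (gy - gx) + K * n1 fx * n2 (gy - gx - Lg)"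
    by (intro add_mono Bb Sf Sdg Sg S)
  also have "\<dots> \<le> K * n1 (fy - fx - L) * (n2 gx + n2 (gy - gx)) + K * n1 L * n2 (gy - gx)
      + K * n1 fx * n2 (gy - gx - Lg)"
  proof -
    have "n2 gy \<le> n2 gx + n2 (gy - gx)"
      using seminormed_triangle[OF ss2 S(4) Sdg] by simp
    moreover have "0 \<le> K * n1 (fy - fx - L)" using K seminormed_nonneg[OF ss1 Sf] by simp
    ultimately show ?thesis by (simp add: mult_left_mono)
  qed
  finally show ?thesis .
qed

lemma tendsto_bilinear_diff:
  assumes ss1: "seminormed_subspace S1 n1" and ss2: "seminormed_subspace S2 n2"
    and ss3: "seminormed_subspace S3 n3" and B: "bilinear B"
    and BS: "\<And>u v. S1 u \<Longrightarrow> S2 v \<Longrightarrow> S3 (B u v)"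
    and Bb: "\<And>u v. S1 u \<Longrightarrow> S2 v \<Longrightarrow> n3 (B u v) \<le> K * n1 u * n2 v" and K: "0 \<le> K"
    and Sf: "\<And>y. S1 (f y)" and Sg: "\<And>y. S2 (g y)"
    and f: "((\<lambda>y. n1 (f y - f x)) \<longlongrightarrow> 0) (at x)" and g: "((\<lambda>y. n2 (g y - g x)) \<longlongrightarrow> 0) (at x)"
  shows "((\<lambda>y. n3 (B (f y) (g y) - B (f x) (g x))) \<longlongrightarrow> 0) (at x)"
proof (rule sandwich_zero)
  let ?U = "\<lambda>y. K * n1 (f y - f x) * (n2 (g x) + n2 (g y - g x)) + K * n1 (f x) * n2 (g y - g x)"
  show "\<forall>\<^sub>F y in at x. 0 \<le> n3 (B (f y) (g y) - B (f x) (g x))"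
    using seminormed_nonneg[OF ss3 seminormed_diff[OF ss3 BS[OF Sf Sg] BS[OF Sf Sg]]] by simp
  have "n3 (B (f y) (g y) - B (f x) (g x)) \<le> ?U y" for y
    using bilinear_remainder_le[OF ss1 ss2 ss3 B BS Bb K Sf[of x] Sf[of y] seminormed_zero[OF ss1]
        Sg[of x] Sg[of y] seminormed_zero[OF ss2]]
    by (simp add: bilinear_lzero[OF B] bilinear_rzero[OF B] seminormed_zero_eq[OF ss1])
  then show "\<forall>\<^sub>F y in at x. n3 (B (f y) (g y) - B (f x) (g x)) \<le> ?U y" by simp
  have "(?U \<longlongrightarrow> K * 0 * (n2 (g x) + 0) + K * n1 (f x) * 0) (at x)"
    by (intro tendsto_intros f g)
  then show "(?U \<longlongrightarrow> 0) (at x)" by simp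
qed

lemma tendsto_bilinear_remainder:
  assumes ss1: "seminormed_subspace S1 n1" and ss2: "seminormed_subspace S2 n2"
    and ss3: "seminormed_subspace S3 n3" and B: "bilinear B"
    and BS: "\<And>u v. S1 u \<Longrightarrow> S2 v \<Longrightarrow> S3 (B u v)"
    and Bb: "\<And>u v. S1 u \<Longrightarrow> S2 v \<Longrightarrow> n3 (B u v) \<le> K * n1 u * n2 v" and K: "0 \<le> K"
    and Sf: "\<And>y. S1 (f y)" "\<And>i. S1 (Df i x)" and Sg: "\<And>y. S2 (g y)" "\<And>i. S2 (Dg i x)"
    and f: "((\<lambda>y. n1 (deriv_remainder f Df x y) / norm (y - x)) \<longlongrightarrow> 0) (at x)"
    and g: "((\<lambda>y. n2 (deriv_remainder g Dg x y) / norm (y - x)) \<longlongrightarrow> 0) (at x)"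
    and g_cont: "((\<lambda>y. n2 (g y - g x)) \<longlongrightarrow> 0) (at x)"
  shows "((\<lambda>y. n3 (deriv_remainder (\<lambda>x. B (f x) (g x)) (\<lambda>i x. B (Df i x) (g x) + B (f x) (Dg i x)) x y)
    / norm (y - x)) \<longlongrightarrow> 0) (at x)"
proof -
  let ?Lf = "\<lambda>y. \<Sum>i\<in>UNIV. ((y - x) $ i) *\<^sub>R Df i x"
  let ?Lg = "\<lambda>y. \<Sum>i\<in>UNIV. ((y - x) $ i) *\<^sub>R Dg i x"
  let ?R = "deriv_remainder (\<lambda>x. B (f x) (g x)) (\<lambda>i x. B (Df i x) (g x) + B (f x) (Dg i x)) x"
  let ?C = "\<Sum>i\<in>UNIV. n1 (Df i x)"
  let ?U = "\<lambda>y. K * (n1 (deriv_remainder f Df x y) / norm (y - x)) * (n2 (g x) + n2 (g y - g x))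
    + K * ?C * n2 (g y - g x) + K * n1 (f x) * (n2 (deriv_remainder g Dg x y) / norm (y - x))"
  have SL: "S1 (?Lf y)" "S2 (?Lg y)" for y
    by (rule seminormed_linear_part[OF ss1 Sf(2)], rule seminormed_linear_part[OF ss2 Sg(2)])
  have R_eq: "?R y = B (f y) (g y) - B (f x) (g x) - (B (?Lf y) (g x) + B (f x) (?Lg y))" for y
    by (simp add: deriv_remainder_def scaleR_add_right sum.distrib bilinear_sum_scaleR_left[OF B]
        bilinear_sum_scaleR_right[OF B] del: vector_minus_component)
  show ?thesis
  proof (rule tendsto_remainder_over_norm[OF ss3])
    show "S3 (?R y)" for y
      unfolding R_eq by (intro seminormed_diff[OF ss3] seminormed_add[OF ss3] BS Sf Sg SL)
    have "n3 (?R y) / norm (y - x) \<le> ?U y" if "y \<noteq> x" for y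
    proof -
      have "n3 (?R y) \<le> K * n1 (deriv_remainder f Df x y) * (n2 (g x) + n2 (g y - g x))
          + K * n1 (?Lf y) * n2 (g y - g x) + K * n1 (f x) * n2 (deriv_remainder g Dg x y)"
        unfolding R_eq unfolding deriv_remainder_def
        by (rule bilinear_remainder_le[OF ss1 ss2 ss3 B BS Bb K Sf(1) Sf(1) SL(1) Sg(1) Sg(1) SL(2)])
      also have "\<dots> \<le> K * n1 (deriv_remainder f Df x y) * (n2 (g x) + n2 (g y - g x))
          + K * (norm (y - x) * ?C) * n2 (g y - g x) + K * n1 (f x) * n2 (deriv_remainder g Dg x y)"
        by (intro add_mono order_refl mult_right_mono mult_left_mono seminormed_linear_part_le[OF ss1] K
            seminormed_nonneg[OF ss2] seminormed_diff[OF ss2] Sf Sg)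
      finally show ?thesis using that by (simp add: field_simps)
    qed
    then show "\<forall>\<^sub>F y in at x. n3 (?R y) / norm (y - x) \<le> ?U y"
      by (auto simp: eventually_at_filter)
    have "(?U \<longlongrightarrow> K * 0 * (n2 (g x) + 0) + K * ?C * 0 + K * n1 (f x) * 0) (at x)"
      by (intro tendsto_intros g_cont f g)
    then show "(?U \<longlongrightarrow> 0) (at x)" by simp
  qed
qed

lemma Ck_wrt_bilinear:
  assumes ss1: "seminormed_subspace S1 n1" and ss2: "seminormed_subspace S2 n2"
    and ss3: "seminormed_subspace S3 n3" and B: "bilinear B"
    and BS: "\<And>u v. S1 u \<Longrightarrow> S2 v \<Longrightarrow> S3 (B u v)"
    and Bb: "\<And>u v. S1 u \<Longrightarrow> S2 v \<Longrightarrow> n3 (B u v) \<le> K * n1 u * n2 v" and K: "0 \<le> K"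
  shows "Ck_wrt S1 n1 k f \<Longrightarrow> Ck_wrt S2 n2 k g \<Longrightarrow> Ck_wrt S3 n3 k (\<lambda>x. B (f x) (g x))"
proof (induction k arbitrary: f g)
  case 0
  have Sf: "\<And>y. S1 (f y)" and Sg: "\<And>y. S2 (g y)" using 0 by auto
  have "((\<lambda>y. n3 (B (f y) (g y) - B (f x) (g x))) \<longlongrightarrow> 0) (at x)" for x
    using 0 by (intro tendsto_bilinear_diff[OF ss1 ss2 ss3 B BS Bb K Sf Sg]) simp_all
  then show ?case by (simp add: BS Sf Sg)
next
  case (Suc k)
  from Suc.prems(1)[unfolded Ck_wrt_Suc_iff] obtain Df where f: "\<forall>x. S1 (f x)" "\<forall>i x. S1 (Df i x)"
    "\<forall>x. ((\<lambda>y. n1 (deriv_remainder f Df x y) / norm (y - x)) \<longlongrightarrow> 0) (at x)" "\<forall>i. Ck_wrt S1 n1 k (Df i)"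
    by blast
  from Suc.prems(2)[unfolded Ck_wrt_Suc_iff] obtain Dg where g: "\<forall>x. S2 (g x)" "\<forall>i x. S2 (Dg i x)"
    "\<forall>x. ((\<lambda>y. n2 (deriv_remainder g Dg x y) / norm (y - x)) \<longlongrightarrow> 0) (at x)" "\<forall>i. Ck_wrt S2 n2 k (Dg i)"
    by blast
  have fk: "Ck_wrt S1 n1 k f" by (rule Ck_wrt_Suc_imp[OF ss1 Suc.prems(1)])
  have gk: "Ck_wrt S2 n2 k g" by (rule Ck_wrt_Suc_imp[OF ss2 Suc.prems(2)])
  have Sf: "\<And>y. S1 (f y)" "\<And>i y. S1 (Df i y)" and Sg: "\<And>y. S2 (g y)" "\<And>i y. S2 (Dg i y)"
    using f g by auto
  show ?case unfolding Ck_wrt_Suc_iff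
  proof (intro conjI exI[of _ "\<lambda>i x. B (Df i x) (g x) + B (f x) (Dg i x)"] allI)
    fix x i
    show "S3 (B (f x) (g x))" using BS Sf Sg by simp
    show "S3 (B (Df i x) (g x) + B (f x) (Dg i x))"
      using seminormed_add[OF ss3 BS[OF Sf(2) Sg(1)] BS[OF Sf(1) Sg(2)]] by simp
    show "Ck_wrt S3 n3 k (\<lambda>x. B (Df i x) (g x) + B (f x) (Dg i x))"
      by (rule Ck_wrt_add[OF ss3, of k "\<lambda>x. B (Df i x) (g x)" "\<lambda>x. B (f x) (Dg i x)"])
        (intro Suc.IH, use f gk g fk in simp_all)+
  next
    fix x
    show "((\<lambda>y. n3 (deriv_remainder (\<lambda>x. B (f x) (g x)) (\<lambda>i x. B (Df i x) (g x) + B (f x) (Dg i x)) x y)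
        / norm (y - x)) \<longlongrightarrow> 0) (at x)"
      by (rule tendsto_bilinear_remainder[OF ss1 ss2 ss3 B BS Bb K Sf Sg f(3)[rule_format] g(3)[rule_format]
            Ck_wrt_continuous[OF ss2 Suc.prems(2)]])
  qed
qed

lemma bilinear_scaleR: "bilinear ((*\<^sub>R) :: real \<Rightarrow> 'v::real_vector \<Rightarrow> 'v)"
  by (simp add: bilinear_def linear_iff scaleR_add_left scaleR_add_right)

lemma Ck_wrt_scaleR:
  assumes ss: "seminormed_subspace S n" and f: "Ck_real k f" and g: "Ck_wrt S n k g"
  shows "Ck_wrt S n k (\<lambda>x. f x *\<^sub>R g x)"
  by (rule Ck_wrt_bilinear[OF seminormed_subspace_real ss ss bilinear_scaleR _ _ _ f g, of 1])
    (simp_all add: seminormed_scaleR[OF ss] seminormed_scaleR_le[OF ss])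

lemma Ck_wrt_uminus:
  assumes ss: "seminormed_subspace S n" and f: "Ck_wrt S n k f"
  shows "Ck_wrt S n k (\<lambda>x. - f x)"
  using Ck_wrt_scaleR[OF ss Ck_wrt_const[OF seminormed_subspace_real TrueI] f, of "-1"] by simp

lemma Ck_real_0_iff: "Ck_real 0 f \<longleftrightarrow> (\<forall>x. isCont f x)"
  by (simp add: isCont_def tendsto_rabs_zero_iff LIM_zero_iff)

lemma deriv_remainder_real_iff_has_derivative:
  fixes f :: "real^'n \<Rightarrow> real"
  shows "((\<lambda>y. \<bar>deriv_remainder f D x y\<bar> / norm (y - x)) \<longlongrightarrow> 0) (at x) \<longleftrightarrow>
    (f has_derivative (\<lambda>h. \<Sum>i\<in>UNIV. h $ i * D i x)) (at x)"
proof -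
  have lin: "bounded_linear (\<lambda>h::real^'n. \<Sum>i\<in>UNIV. h $ i * D i x)"
    by (intro bounded_linear_sum bounded_linear_mult_left[THEN bounded_linear_compose] bounded_linear_vec_nth)
  have eq: "(\<lambda>y. \<bar>deriv_remainder f D x y\<bar> / norm (y - x))
      = (\<lambda>y. \<bar>((f y - f x) - (\<Sum>i\<in>UNIV. (y - x) $ i * D i x)) /\<^sub>R norm (y - x)\<bar>)"
    by (rule ext) (simp add: deriv_remainder_def divide_inverse abs_mult mult.commute del: vector_minus_component)
  show ?thesis
    unfolding has_derivative_at_within[of f _ x UNIV] eq tendsto_rabs_zero_iff using lin by simp
qed

lemma Ck_real_Suc_iff:
  "Ck_real (Suc k) f \<longleftrightarrow>
     (\<exists>D. (\<forall>x. (f has_derivative (\<lambda>h. \<Sum>i\<in>UNIV. h $ i * D i x)) (at x)) \<and> (\<forall>i. Ck_real k (D i)))"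
  by (simp add: Ck_wrt_Suc_iff deriv_remainder_real_iff_has_derivative)

lemma Ck_real_mult: "Ck_real k f \<Longrightarrow> Ck_real k g \<Longrightarrow> Ck_real k (\<lambda>x. f x * g x)"
  by (rule Ck_wrt_bilinear[OF seminormed_subspace_real seminormed_subspace_real seminormed_subspace_real
        bilinear_times, of 1]) (simp_all add: abs_mult)

lemma Ck_real_inverse: "Ck_real k f \<Longrightarrow> (\<forall>x. f x \<noteq> 0) \<Longrightarrow> Ck_real k (\<lambda>x. inverse (f x))"
proof (induction k arbitrary: f)
  case 0
  then show ?case unfolding Ck_real_0_iff by (auto intro: continuous_at_within_inverse)
next
  case (Suc k)
  from Suc.prems(1)[unfolded Ck_real_Suc_iff] obtain D where
    D: "\<And>x. (f has_derivative (\<lambda>h. \<Sum>i\<in>UNIV. h $ i * D i x)) (at x)" "\<And>i. Ck_real k (D i)"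
    by blast
  have inv: "Ck_real k (\<lambda>x. inverse (f x))"
    using Suc.IH[OF Ck_wrt_Suc_imp[OF seminormed_subspace_real Suc.prems(1)]] Suc.prems(2) .
  show ?case unfolding Ck_real_Suc_iff
  proof (intro exI[of _ "\<lambda>i x. - (D i x * (inverse (f x) * inverse (f x)))"] conjI allI)
    fix i show "Ck_real k (\<lambda>x. - (D i x * (inverse (f x) * inverse (f x))))"
      by (intro Ck_wrt_uminus[OF seminormed_subspace_real] Ck_real_mult D inv)
  next
    fix x
    have "((\<lambda>x. inverse (f x)) has_derivative
        (\<lambda>h. - (inverse (f x) * (\<Sum>i\<in>UNIV. h $ i * D i x) * inverse (f x)))) (at x)"
      by (rule Deriv.has_derivative_inverse[OF _ D(1)]) (use Suc.prems(2) in simp)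
    moreover have "(\<lambda>h. - (inverse (f x) * (\<Sum>i\<in>UNIV. h $ i * D i x) * inverse (f x))) =
        (\<lambda>h. \<Sum>i\<in>UNIV. h $ i * - (D i x * (inverse (f x) * inverse (f x))))"
      by (simp add: fun_eq_iff sum_distrib_right sum_distrib_left sum_negf mult_ac)
    ultimately show "((\<lambda>x. inverse (f x)) has_derivative
        (\<lambda>h. \<Sum>i\<in>UNIV. h $ i * - (D i x * (inverse (f x) * inverse (f x))))) (at x)"
      by simp
  qed
qed

section \<open>The space C([0,a2])\<close>

lemma sum_fun_apply: "(\<Sum>i\<in>A. F i) (a::'a) = (\<Sum>i\<in>A. (F i a :: 'b::comm_monoid_add))"
  by (induction A rule: infinite_finite_induct) simp_all

lemma scaleR_fun_apply [simp]: "(r *\<^sub>R f) a = r *\<^sub>R f a"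
  by (simp add: scaleR_fun_def)

lemma deriv_remainder_apply:
  "deriv_remainder f D x y a = f y a - f x a - (\<Sum>i\<in>UNIV. ((y - x) $ i) * D i x a)"
  by (simp add: deriv_remainder_def sum_fun_apply del: vector_minus_component)

lemma bilinear_times_fun: "bilinear (\<lambda>u v :: 'a \<Rightarrow> real. u * v)"
  by (auto simp: bilinear_def linear_iff fun_eq_iff algebra_simps)

definition C_mem :: "real \<Rightarrow> (real \<Rightarrow> real) \<Rightarrow> bool" where
  "C_mem a2 v \<longleftrightarrow> continuous_on {0..a2} v"

definition C_nrm :: "real \<Rightarrow> (real \<Rightarrow> real) \<Rightarrow> real" where
  "C_nrm a2 v = (SUP a\<in>{0..a2}. \<bar>v a\<bar>)"

abbreviation Ck_C :: "real \<Rightarrow> nat \<Rightarrow> (real^'n \<Rightarrow> real \<Rightarrow> real) \<Rightarrow> bool" where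
  "Ck_C a2 \<equiv> Ck_wrt (C_mem a2) (C_nrm a2)"

lemma C_nrm_ge: "C_mem a2 v \<Longrightarrow> a \<in> {0..a2} \<Longrightarrow> \<bar>v a\<bar> \<le> C_nrm a2 v"
  unfolding C_nrm_def C_mem_def
proof (rule cSUP_upper)
  assume "continuous_on {0..a2} v"
  then have "compact ((\<lambda>a. \<bar>v a\<bar>) ` {0..a2})"
    by (intro compact_continuous_image continuous_intros) auto
  then show "bdd_above ((\<lambda>a. \<bar>v a\<bar>) ` {0..a2})"
    by (intro bounded_imp_bdd_above compact_imp_bounded)
qed

lemma C_nrm_le: "0 \<le> a2 \<Longrightarrow> (\<And>a. a \<in> {0..a2} \<Longrightarrow> \<bar>v a\<bar> \<le> c) \<Longrightarrow> C_nrm a2 v \<le> c"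
  unfolding C_nrm_def by (rule cSUP_least) auto

lemma C_nrm_nonneg: "0 \<le> a2 \<Longrightarrow> C_mem a2 v \<Longrightarrow> 0 \<le> C_nrm a2 v"
  using C_nrm_ge[of a2 v 0] by force

lemma seminormed_subspace_C: assumes "0 \<le> a2" shows "seminormed_subspace (C_mem a2) (C_nrm a2)"
  unfolding seminormed_subspace_def
proof (intro conjI allI impI)
  show "C_mem a2 0" by (simp add: C_mem_def zero_fun_def)
  fix u v assume u: "C_mem a2 u" and v: "C_mem a2 v"
  show "C_mem a2 (u + v)" using u v by (simp add: C_mem_def plus_fun_def continuous_on_add)
  show "C_nrm a2 (u + v) \<le> C_nrm a2 u + C_nrm a2 v"
    using C_nrm_ge[OF u] C_nrm_ge[OF v] assms
    by (intro C_nrm_le) (auto intro: order_trans[OF abs_triangle_ineq add_mono])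
next
  fix r u assume u: "C_mem a2 u"
  show "C_mem a2 (r *\<^sub>R u)" using u unfolding C_mem_def scaleR_fun_def by (auto intro!: continuous_intros)
  show "C_nrm a2 (r *\<^sub>R u) \<le> \<bar>r\<bar> * C_nrm a2 u"
    using C_nrm_ge[OF u] assms by (intro C_nrm_le) (auto simp: abs_mult intro: mult_left_mono)
next
  fix u assume "C_mem a2 u" then show "0 \<le> C_nrm a2 u" using C_nrm_nonneg assms by blast
qed

lemma C_mem_times: "C_mem a2 u \<Longrightarrow> C_mem a2 v \<Longrightarrow> C_mem a2 (u * v)"
  unfolding C_mem_def times_fun_def by (intro continuous_intros)

lemma C_mem_diff: "C_mem a2 u \<Longrightarrow> C_mem a2 v \<Longrightarrow> C_mem a2 (u - v)"
  unfolding C_mem_def fun_diff_def by (intro continuous_intros)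

lemma Ck_C_times:
  assumes "0 \<le> a2" "Ck_C a2 k f" "Ck_C a2 k g"
  shows "Ck_C a2 k (\<lambda>x. f x * g x)"
proof -
  have ss: "seminormed_subspace (C_mem a2) (C_nrm a2)" by (rule seminormed_subspace_C[OF assms(1)])
  have "C_nrm a2 (u * v) \<le> 1 * C_nrm a2 u * C_nrm a2 v" if "C_mem a2 u" "C_mem a2 v" for u v
    using assms(1) that by (intro C_nrm_le) (auto simp: abs_mult intro!: mult_mono C_nrm_ge C_nrm_nonneg)
  then show ?thesis
    using Ck_wrt_bilinear[of "C_mem a2" "C_nrm a2" "C_mem a2" "C_nrm a2" "C_mem a2" "C_nrm a2" "(*)" 1 k f g]
      ss bilinear_times_fun C_mem_times assms(2,3) by simp
qed

lemma Ck_C_cong: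
  assumes eq: "\<And>x a. a \<in> {0..a2} \<Longrightarrow> f x a = g x a" and f: "Ck_C a2 k f"
  shows "Ck_C a2 k g"
proof -
  have C_nrm_cong: "C_nrm a2 u = C_nrm a2 v" if "\<And>a. a \<in> {0..a2} \<Longrightarrow> u a = v a" for u v
    unfolding C_nrm_def using that by (intro SUP_cong) auto
  have Sg: "C_mem a2 (g x)" for x
    using Ck_wrt_mem[OF f, of x] unfolding C_mem_def by (auto intro: continuous_on_eq simp: eq)
  show ?thesis
  proof (cases k)
    case 0
    have "C_nrm a2 (g y - g x) = C_nrm a2 (f y - f x)" for x y
      by (rule C_nrm_cong) (simp add: eq)
    then show ?thesis using f Sg 0 by simp
  next
    case (Suc m)
    from f[unfolded Suc Ck_wrt_Suc_iff] obtain D where D: "\<forall>i x. C_mem a2 (D i x)"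
      "\<forall>x. ((\<lambda>y. C_nrm a2 (deriv_remainder f D x y) / norm (y - x)) \<longlongrightarrow> 0) (at x)"
      "\<forall>i. Ck_C a2 m (D i)" by blast
    have "C_nrm a2 (deriv_remainder g D x y) = C_nrm a2 (deriv_remainder f D x y)" for x y
      by (rule C_nrm_cong) (simp add: eq deriv_remainder_apply)
    then show ?thesis unfolding Suc Ck_wrt_Suc_iff using Sg D by (intro conjI exI[of _ D]) auto
  qed
qed

lemma abs_exp_minus_one_le: "\<bar>exp (d::real) - 1\<bar> \<le> \<bar>d\<bar> * exp \<bar>d\<bar>"
proof -
  obtain t where t: "\<bar>t\<bar> \<le> \<bar>d\<bar>" "exp d = (\<Sum>m<1. d ^ m / fact m) + exp t / fact 1 * d ^ 1"
    using Maclaurin_exp_le[of d 1] by blast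
  then have "\<bar>exp d - 1\<bar> = exp t * \<bar>d\<bar>" by (simp add: abs_mult)
  also have "\<dots> \<le> exp \<bar>d\<bar> * \<bar>d\<bar>" using t(1) by (intro mult_right_mono) auto
  finally show ?thesis by (simp add: mult.commute)
qed

lemma abs_exp_minus_one_minus_le: "\<bar>exp (d::real) - 1 - d\<bar> \<le> d\<^sup>2 * exp \<bar>d\<bar>"
proof -
  obtain t where t: "\<bar>t\<bar> \<le> \<bar>d\<bar>" "exp d = (\<Sum>m<2. d ^ m / fact m) + exp t / fact 2 * d ^ 2"
    using Maclaurin_exp_le[of d 2] by blast
  then have "\<bar>exp d - 1 - d\<bar> = exp t / 2 * d\<^sup>2" by (simp add: eval_nat_numeral)
  also have "\<dots> \<le> exp \<bar>d\<bar> * d\<^sup>2"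
  proof (rule mult_right_mono)
    have "exp t \<le> exp \<bar>d\<bar>" using t(1) by simp
    then show "exp t / 2 \<le> exp \<bar>d\<bar>" using exp_gt_zero[of t] by linarith
  qed simp
  finally show ?thesis by (simp add: mult.commute)
qed

lemma C_nrm_exp_diff_le:
  assumes a2: "0 \<le> a2" and v: "C_mem a2 v" and w: "C_mem a2 w"
  shows "C_nrm a2 (\<lambda>a. exp (w a) - exp (v a)) \<le> exp (C_nrm a2 v) * (C_nrm a2 (w - v) * exp (C_nrm a2 (w - v)))"
proof (rule C_nrm_le[OF a2])
  fix a assume a: "a \<in> {0..a2}"
  have d: "\<bar>w a - v a\<bar> \<le> C_nrm a2 (w - v)"
    using C_nrm_ge[OF C_mem_diff[OF w v] a] by simp
  have "\<bar>exp (w a) - exp (v a)\<bar> = exp (v a) * \<bar>exp (w a - v a) - 1\<bar>"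
    by (simp add: exp_diff abs_mult field_simps)
  also have "\<dots> \<le> exp (C_nrm a2 v) * (C_nrm a2 (w - v) * exp (C_nrm a2 (w - v)))"
    using C_nrm_ge[OF v a] d
    by (intro mult_mono order_trans[OF abs_exp_minus_one_le]) auto
  finally show "\<bar>exp (w a) - exp (v a)\<bar> \<le> exp (C_nrm a2 v) * (C_nrm a2 (w - v) * exp (C_nrm a2 (w - v)))" .
qed

lemma C_nrm_exp_remainder_le:
  assumes a2: "0 \<le> a2" and v: "C_mem a2 v" and w: "C_mem a2 w" and l: "C_mem a2 l"
  shows "C_nrm a2 (\<lambda>a. exp (w a) - exp (v a) - exp (v a) * l a)
    \<le> exp (C_nrm a2 v) * ((C_nrm a2 (w - v))\<^sup>2 * exp (C_nrm a2 (w - v)) + C_nrm a2 (w - v - l))"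
proof (rule C_nrm_le[OF a2])
  fix a assume a: "a \<in> {0..a2}"
  have ss: "seminormed_subspace (C_mem a2) (C_nrm a2)" by (rule seminormed_subspace_C[OF a2])
  let ?d = "C_nrm a2 (w - v)"
  have d: "\<bar>w a - v a\<bar> \<le> ?d" using C_nrm_ge[OF C_mem_diff[OF w v] a] by simp
  have r: "\<bar>w a - v a - l a\<bar> \<le> C_nrm a2 (w - v - l)"
    using C_nrm_ge[OF C_mem_diff[OF C_mem_diff[OF w v] l] a] by simp
  have "exp (w a) - exp (v a) - exp (v a) * l a
      = exp (v a) * (exp (w a - v a) - 1 - (w a - v a)) + exp (v a) * (w a - v a - l a)"
    by (simp add: exp_diff field_simps)
  then have "\<bar>exp (w a) - exp (v a) - exp (v a) * l a\<bar>
      \<le> exp (v a) * \<bar>exp (w a - v a) - 1 - (w a - v a)\<bar> + exp (v a) * \<bar>w a - v a - l a\<bar>"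
    by (simp add: abs_mult order_trans[OF abs_triangle_ineq])
  also have "\<dots> \<le> exp (C_nrm a2 v) * (?d\<^sup>2 * exp ?d) + exp (C_nrm a2 v) * C_nrm a2 (w - v - l)"
  proof (intro add_mono mult_mono r)
    show "exp (v a) \<le> exp (C_nrm a2 v)" using C_nrm_ge[OF v a] by simp
    have "(w a - v a)\<^sup>2 \<le> ?d\<^sup>2" using d by (metis abs_ge_zero power2_abs power_mono)
    then show "\<bar>exp (w a - v a) - 1 - (w a - v a)\<bar> \<le> ?d\<^sup>2 * exp ?d"
      using d by (intro order_trans[OF abs_exp_minus_one_minus_le] mult_mono) auto
  qed (use C_nrm_ge[OF v a] in \<open>auto intro: C_nrm_nonneg[OF a2] C_mem_diff v w l\<close>)
  finally show "\<bar>exp (w a) - exp (v a) - exp (v a) * l a\<bar>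
      \<le> exp (C_nrm a2 v) * (?d\<^sup>2 * exp ?d + C_nrm a2 (w - v - l))"
    by (simp add: distrib_left)
qed

lemma C_mem_exp: "C_mem a2 v \<Longrightarrow> C_mem a2 (\<lambda>a. exp (v a))"
  unfolding C_mem_def by (intro continuous_intros)

lemma tendsto_exp_remainder:
  assumes a2: "0 \<le> a2" and Sh: "\<And>y. C_mem a2 (h y)" "\<And>i. C_mem a2 (Dh i x)"
    and rem: "((\<lambda>y. C_nrm a2 (deriv_remainder h Dh x y) / norm (y - x)) \<longlongrightarrow> 0) (at x)"
    and cont: "((\<lambda>y. C_nrm a2 (h y - h x)) \<longlongrightarrow> 0) (at x)"
  shows "((\<lambda>y. C_nrm a2 (deriv_remainder (\<lambda>x a. exp (h x a)) (\<lambda>i x. (\<lambda>a. exp (h x a)) * Dh i x) x y)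
    / norm (y - x)) \<longlongrightarrow> 0) (at x)"
proof -
  have ss: "seminormed_subspace (C_mem a2) (C_nrm a2)" by (rule seminormed_subspace_C[OF a2])
  let ?L = "\<lambda>y. \<Sum>i\<in>UNIV. ((y - x) $ i) *\<^sub>R Dh i x"
  let ?R = "deriv_remainder (\<lambda>x a. exp (h x a)) (\<lambda>i x. (\<lambda>a. exp (h x a)) * Dh i x) x"
  let ?d = "\<lambda>y. C_nrm a2 (h y - h x)"
  let ?r = "\<lambda>y. C_nrm a2 (deriv_remainder h Dh x y) / norm (y - x)"
  let ?C = "\<Sum>i\<in>UNIV. C_nrm a2 (Dh i x)"
  let ?U = "\<lambda>y. exp (C_nrm a2 (h x)) * (?d y * (?r y + ?C) * exp (?d y) + ?r y)"
  have SL: "C_mem a2 (?L y)" for y by (rule seminormed_linear_part[OF ss]) (rule Sh(2))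
  have R_eq: "?R y = (\<lambda>a. exp (h y a) - exp (h x a) - exp (h x a) * ?L y a)" for y
    by (simp add: fun_eq_iff deriv_remainder_apply sum_fun_apply sum_distrib_left algebra_simps
        del: vector_minus_component)
  have rem_eq: "h y - h x - ?L y = deriv_remainder h Dh x y" for y
    by (simp add: deriv_remainder_def)
  have d_le: "?d y \<le> C_nrm a2 (deriv_remainder h Dh x y) + norm (y - x) * ?C" for y
    by (rule deriv_remainder_increment_le[of _ _ h Dh x, OF ss Sh])
  show ?thesis
  proof (rule tendsto_remainder_over_norm[OF ss])
    show "C_mem a2 (?R y)" for y
      unfolding R_eq using C_mem_times[OF C_mem_exp[OF Sh(1)] SL, of x y]
      by (intro C_mem_diff[unfolded fun_diff_def] C_mem_exp Sh) (simp add: times_fun_def)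
    have "C_nrm a2 (?R y) / norm (y - x) \<le> ?U y" if "y \<noteq> x" for y
    proof -
      have np: "0 < norm (y - x)" using that by simp
      have dsq: "(?d y)\<^sup>2 / norm (y - x) \<le> ?d y * (?r y + ?C)"
      proof -
        have "?d y / norm (y - x) \<le> ?r y + ?C" using d_le[of y] np by (simp add: field_simps)
        then have "?d y * (?d y / norm (y - x)) \<le> ?d y * (?r y + ?C)"
          using C_nrm_nonneg[OF a2 C_mem_diff[OF Sh(1) Sh(1)]] by (intro mult_left_mono) auto
        then show ?thesis by (simp add: power2_eq_square)
      qed
      let ?E = "exp (C_nrm a2 (h x))"
      have "C_nrm a2 (?R y) \<le> ?E * ((?d y)\<^sup>2 * exp (?d y) + C_nrm a2 (deriv_remainder h Dh x y))"
        unfolding R_eq rem_eq[symmetric] by (rule C_nrm_exp_remainder_le[OF a2 Sh(1) Sh(1) SL])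
      then have "C_nrm a2 (?R y) / norm (y - x)
          \<le> ?E * ((?d y)\<^sup>2 * exp (?d y) + C_nrm a2 (deriv_remainder h Dh x y)) / norm (y - x)"
        by (rule divide_right_mono) simp
      also have "\<dots> = ?E * ((?d y)\<^sup>2 / norm (y - x) * exp (?d y) + ?r y)"
        using np by (simp add: field_simps)
      also have "\<dots> \<le> ?U y"
        using dsq by (intro mult_left_mono add_mono mult_right_mono) auto
      finally show ?thesis .
    qed
    then show "\<forall>\<^sub>F y in at x. C_nrm a2 (?R y) / norm (y - x) \<le> ?U y"
      by (auto simp: eventually_at_filter)
    have "(?U \<longlongrightarrow> exp (C_nrm a2 (h x)) * (0 * (0 + ?C) * exp 0 + 0)) (at x)"
      by (intro tendsto_intros cont rem)
    then show "(?U \<longlongrightarrow> 0) (at x)" by simp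
  qed
qed

lemma Ck_C_exp:
  assumes a2: "0 \<le> a2"
  shows "Ck_C a2 k h \<Longrightarrow> Ck_C a2 k (\<lambda>x a. exp (h x a))"
proof (induction k arbitrary: h)
  have ss: "seminormed_subspace (C_mem a2) (C_nrm a2)" by (rule seminormed_subspace_C[OF a2])
  case 0
  have Sh: "\<And>y. C_mem a2 (h y)" using 0 by auto
  show ?case unfolding Ck_wrt.simps
  proof (intro conjI allI)
    fix x
    show "C_mem a2 (\<lambda>a. exp (h x a))" by (rule C_mem_exp[OF Sh])
    let ?U = "\<lambda>y. exp (C_nrm a2 (h x)) * (C_nrm a2 (h y - h x) * exp (C_nrm a2 (h y - h x)))"
    show "((\<lambda>y. C_nrm a2 ((\<lambda>a. exp (h y a)) - (\<lambda>a. exp (h x a)))) \<longlongrightarrow> 0) (at x)"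
    proof (rule sandwich_zero)
      show "\<forall>\<^sub>F y in at x. 0 \<le> C_nrm a2 ((\<lambda>a. exp (h y a)) - (\<lambda>a. exp (h x a)))"
        using C_nrm_nonneg[OF a2 C_mem_diff[OF C_mem_exp[OF Sh] C_mem_exp[OF Sh]]] by simp
      show "\<forall>\<^sub>F y in at x. C_nrm a2 ((\<lambda>a. exp (h y a)) - (\<lambda>a. exp (h x a))) \<le> ?U y"
        using C_nrm_exp_diff_le[OF a2 Sh Sh] by (simp add: fun_diff_def)
      have "(?U \<longlongrightarrow> exp (C_nrm a2 (h x)) * (0 * exp 0)) (at x)"
        by (intro tendsto_intros Ck_wrt_continuous[OF ss 0])
      then show "(?U \<longlongrightarrow> 0) (at x)" by simp
    qed
  qed
next
  have ss: "seminormed_subspace (C_mem a2) (C_nrm a2)" by (rule seminormed_subspace_C[OF a2])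
  case (Suc k)
  from Suc.prems(1)[unfolded Ck_wrt_Suc_iff] obtain Dh where h: "\<forall>x. C_mem a2 (h x)" "\<forall>i x. C_mem a2 (Dh i x)"
    "\<forall>x. ((\<lambda>y. C_nrm a2 (deriv_remainder h Dh x y) / norm (y - x)) \<longlongrightarrow> 0) (at x)"
    "\<forall>i. Ck_C a2 k (Dh i)" by blast
  have Sh: "\<And>y. C_mem a2 (h y)" "\<And>i y. C_mem a2 (Dh i y)" using h by auto
  have hk: "Ck_C a2 k h" by (rule Ck_wrt_Suc_imp[OF ss Suc.prems(1)])
  show ?case unfolding Ck_wrt_Suc_iff
  proof (intro conjI exI[of _ "\<lambda>i x. (\<lambda>a. exp (h x a)) * Dh i x"] allI)
    fix x i
    show "C_mem a2 (\<lambda>a. exp (h x a))" by (rule C_mem_exp[OF Sh(1)])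
    show "C_mem a2 ((\<lambda>a. exp (h x a)) * Dh i x)" by (intro C_mem_times C_mem_exp Sh)
    show "Ck_C a2 k (\<lambda>x. (\<lambda>a. exp (h x a)) * Dh i x)"
      by (rule Ck_C_times[OF a2 Suc.IH[OF hk] h(4)[rule_format]])
  next
    fix x
    show "((\<lambda>y. C_nrm a2 (deriv_remainder (\<lambda>x a. exp (h x a)) (\<lambda>i x. (\<lambda>a. exp (h x a)) * Dh i x) x y)
        / norm (y - x)) \<longlongrightarrow> 0) (at x)"
      by (rule tendsto_exp_remainder[OF a2 Sh h(3)[rule_format] Ck_wrt_continuous[OF ss Suc.prems(1)]])
  qed
qed

lemma CR_nrm_eq: "CR_nrm a2 p = max (C_nrm a2 (fst p)) \<bar>snd p\<bar>"
  by (simp add: CR_nrm_def C_nrm_def)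

lemma CR_mem_eq: "CR_mem a2 p = C_mem a2 (fst p)"
  by (simp add: CR_mem_def C_mem_def)

lemma deriv_remainder_Pair:
  "deriv_remainder (\<lambda>x. (f x, g x)) (\<lambda>i x. (Df i x, Dg i x)) x y = (deriv_remainder f Df x y, deriv_remainder g Dg x y)"
  by (simp add: deriv_remainder_def prod_eq_iff fst_sum snd_sum del: vector_minus_component)

lemma Ck_CR_Pair:
  assumes a2: "0 \<le> a2"
  shows "Ck_C a2 k f \<Longrightarrow> Ck_real k g \<Longrightarrow> Ck_wrt (CR_mem a2) (CR_nrm a2) k (\<lambda>x. (f x, g x))"
proof (induction k arbitrary: f g)
  have ss: "seminormed_subspace (C_mem a2) (C_nrm a2)" by (rule seminormed_subspace_C[OF a2])
  case 0
  have Sf: "\<And>y. C_mem a2 (f y)" using 0 by auto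
  have "((\<lambda>y. C_nrm a2 (f y - f x) + \<bar>g y - g x\<bar>) \<longlongrightarrow> 0) (at x)" for x
    by (rule tendsto_eq_rhs[OF tendsto_add[OF Ck_wrt_continuous[OF ss 0(1)]
          Ck_wrt_continuous[OF seminormed_subspace_real 0(2)]]]) simp
  moreover have "max (C_nrm a2 (f y - f x)) \<bar>g y - g x\<bar> \<le> C_nrm a2 (f y - f x) + \<bar>g y - g x\<bar>" for x y
    using C_nrm_nonneg[OF a2 C_mem_diff[OF Sf Sf]] by simp
  ultimately have "((\<lambda>y. max (C_nrm a2 (f y - f x)) \<bar>g y - g x\<bar>) \<longlongrightarrow> 0) (at x)" for x
    by (intro sandwich_zero[of "\<lambda>y. max (C_nrm a2 (f y - f x)) \<bar>g y - g x\<bar>" _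
          "\<lambda>y. C_nrm a2 (f y - f x) + \<bar>g y - g x\<bar>"]) (auto simp: le_max_iff_disj)
  then show ?case using Sf by (simp add: CR_mem_eq CR_nrm_eq)
next
  case (Suc k)
  from Suc.prems(1)[unfolded Ck_wrt_Suc_iff] obtain Df where f: "\<forall>x. C_mem a2 (f x)" "\<forall>i x. C_mem a2 (Df i x)"
    "\<forall>x. ((\<lambda>y. C_nrm a2 (deriv_remainder f Df x y) / norm (y - x)) \<longlongrightarrow> 0) (at x)"
    "\<forall>i. Ck_C a2 k (Df i)" by blast
  from Suc.prems(2)[unfolded Ck_wrt_Suc_iff] obtain Dg where g:
    "\<forall>x. ((\<lambda>y. \<bar>deriv_remainder g Dg x y\<bar> / norm (y - x)) \<longlongrightarrow> 0) (at x)" "\<forall>i. Ck_real k (Dg i)"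
    by blast
  show ?case unfolding Ck_wrt_Suc_iff
  proof (intro conjI exI[of _ "\<lambda>i x. (Df i x, Dg i x)"] allI)
    fix x i
    show "CR_mem a2 (f x, g x)" "CR_mem a2 (Df i x, Dg i x)" using f by (simp_all add: CR_mem_eq)
    show "Ck_wrt (CR_mem a2) (CR_nrm a2) k (\<lambda>x. (Df i x, Dg i x))"
      using f(4) g(2) by (intro Suc.IH) simp_all
  next
    fix x
    have Sr: "C_mem a2 (deriv_remainder f Df x y)" for y
      by (rule deriv_remainder_mem[OF seminormed_subspace_C[OF a2]]) (use f in auto)
    show "((\<lambda>y. CR_nrm a2 (deriv_remainder (\<lambda>x. (f x, g x)) (\<lambda>i x. (Df i x, Dg i x)) x y) / norm (y - x))
        \<longlongrightarrow> 0) (at x)"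
      unfolding deriv_remainder_Pair CR_nrm_eq fst_conv snd_conv
    proof (rule sandwich_zero)
      show "\<forall>\<^sub>F y in at x. 0 \<le> max (C_nrm a2 (deriv_remainder f Df x y)) \<bar>deriv_remainder g Dg x y\<bar> / norm (y - x)"
        by simp
      show "\<forall>\<^sub>F y in at x. max (C_nrm a2 (deriv_remainder f Df x y)) \<bar>deriv_remainder g Dg x y\<bar> / norm (y - x)
          \<le> C_nrm a2 (deriv_remainder f Df x y) / norm (y - x) + \<bar>deriv_remainder g Dg x y\<bar> / norm (y - x)"
        using C_nrm_nonneg[OF a2 Sr]
        by (intro always_eventually allI) (simp add: add_divide_distrib[symmetric] divide_right_mono)
      show "((\<lambda>y. C_nrm a2 (deriv_remainder f Df x y) / norm (y - x) + \<bar>deriv_remainder g Dg x y\<bar> / norm (y - x))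
          \<longlongrightarrow> 0) (at x)"
        using tendsto_add[OF f(3)[rule_format, of x] g(1)[rule_format, of x]] by simp
    qed
  qed
qed

section \<open>The space L-infinity(0,a2)\<close>

abbreviation Ck_Linf :: "real \<Rightarrow> nat \<Rightarrow> (real^'n \<Rightarrow> real \<Rightarrow> real) \<Rightarrow> bool" where
  "Ck_Linf a2 \<equiv> Ck_wrt (Linf_mem a2) (Linf_nrm a2)"

lemma finite_measure_lebesgue_on_Ioo: "finite_measure (lebesgue_on {0<..<(b::real)})"
  by (rule finite_measure_lebesgue_on) simp

lemma esssup_abs_nonneg:
  assumes a2: "0 < (a2::real)"
  shows "0 \<le> esssup (lebesgue_on {0<..<a2}) (\<lambda>a. ereal \<bar>u a\<bar>)"
proof (rule ccontr)
  assume "\<not> ?thesis"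
  then have neg: "esssup (lebesgue_on {0<..<a2}) (\<lambda>a. ereal \<bar>u a\<bar>) < 0" by simp
  have "AE a in lebesgue_on {0<..<a2}. ereal \<bar>u a\<bar> \<le> esssup (lebesgue_on {0<..<a2}) (\<lambda>a. ereal \<bar>u a\<bar>)"
    by (rule esssup_AE)
  then have "AE a in lebesgue_on {0<..<a2}. False"
    by eventually_elim (use neg in \<open>auto dest: order.strict_trans1[of _ _ 0]\<close>)
  then have "emeasure (lebesgue_on {0<..<a2}) (space (lebesgue_on {0<..<a2})) = 0"
    using ae_filter_eq_bot_iff eventually_False by metis
  then show False using a2 by (simp add: emeasure_restrict_space)
qed

lemma Linf_nrm_nonneg: "0 < a2 \<Longrightarrow> 0 \<le> Linf_nrm a2 u"
  unfolding Linf_nrm_def by (rule real_of_ereal_pos[OF esssup_abs_nonneg])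

lemma Linf_nrm_AE_bound:
  assumes a2: "0 < a2" and u: "Linf_mem a2 u"
  shows "AE a in lebesgue_on {0<..<a2}. \<bar>u a\<bar> \<le> Linf_nrm a2 u"
proof -
  have "esssup (lebesgue_on {0<..<a2}) (\<lambda>a. ereal \<bar>u a\<bar>) < \<infinity>" using u by (simp add: Linf_mem_def)
  then have "esssup (lebesgue_on {0<..<a2}) (\<lambda>a. ereal \<bar>u a\<bar>) = ereal (Linf_nrm a2 u)"
    using esssup_abs_nonneg[OF a2, of u] unfolding Linf_nrm_def
    by (cases "esssup (lebesgue_on {0<..<a2}) (\<lambda>a. ereal \<bar>u a\<bar>)") auto
  then show ?thesis using esssup_AE[of "\<lambda>a. ereal \<bar>u a\<bar>" "lebesgue_on {0<..<a2}"] by simp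
qed

lemma Linf_memI:
  assumes a2: "0 < (a2::real)" and m: "u \<in> borel_measurable (lebesgue_on {0<..<a2})"
    and b: "AE a in lebesgue_on {0<..<a2}. \<bar>u a\<bar> \<le> c" and c: "0 \<le> c"
  shows "Linf_mem a2 u" "Linf_nrm a2 u \<le> c"
proof -
  have "esssup (lebesgue_on {0<..<a2}) (\<lambda>a. ereal \<bar>u a\<bar>) \<le> ereal c"
    by (rule esssup_I) (use m b in auto)
  with esssup_abs_nonneg[OF a2, of u] show "Linf_mem a2 u" "Linf_nrm a2 u \<le> c"
    unfolding Linf_mem_def Linf_nrm_def using m
    by (cases "esssup (lebesgue_on {0<..<a2}) (\<lambda>a. ereal \<bar>u a\<bar>)"; auto)+
qed

lemma Linf_mem_measurable: "Linf_mem a2 u \<Longrightarrow> u \<in> borel_measurable (lebesgue_on {0<..<a2})"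
  by (simp add: Linf_mem_def)

lemma seminormed_subspace_Linf:
  assumes a2: "0 < a2"
  shows "seminormed_subspace (Linf_mem a2) (Linf_nrm a2)"
  unfolding seminormed_subspace_def
proof (intro conjI allI impI)
  show "Linf_mem a2 0" by (rule Linf_memI[OF a2, of 0 0]) (auto simp: zero_fun_def)
next
  fix u v assume u: "Linf_mem a2 u" and v: "Linf_mem a2 v"
  have m: "(u + v) \<in> borel_measurable (lebesgue_on {0<..<a2})"
    using Linf_mem_measurable[OF u] Linf_mem_measurable[OF v] by (simp add: plus_fun_def)
  have b: "AE a in lebesgue_on {0<..<a2}. \<bar>(u + v) a\<bar> \<le> Linf_nrm a2 u + Linf_nrm a2 v"
    using Linf_nrm_AE_bound[OF a2 u] Linf_nrm_AE_bound[OF a2 v] by eventually_elim auto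
  show "Linf_mem a2 (u + v)" "Linf_nrm a2 (u + v) \<le> Linf_nrm a2 u + Linf_nrm a2 v"
    using Linf_memI[OF a2 m b] Linf_nrm_nonneg[OF a2] by (auto simp: plus_fun_def add_nonneg_nonneg)
next
  fix r u assume u: "Linf_mem a2 u"
  have m: "(r *\<^sub>R u) \<in> borel_measurable (lebesgue_on {0<..<a2})"
    using Linf_mem_measurable[OF u] by (simp add: scaleR_fun_def)
  have b: "AE a in lebesgue_on {0<..<a2}. \<bar>(r *\<^sub>R u) a\<bar> \<le> \<bar>r\<bar> * Linf_nrm a2 u"
    using Linf_nrm_AE_bound[OF a2 u] by eventually_elim (auto simp: abs_mult intro: mult_left_mono)
  show "Linf_mem a2 (r *\<^sub>R u)" "Linf_nrm a2 (r *\<^sub>R u) \<le> \<bar>r\<bar> * Linf_nrm a2 u"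
    using Linf_memI[OF a2 m b] Linf_nrm_nonneg[OF a2] by (auto simp: scaleR_fun_def)
next
  fix u show "0 \<le> Linf_nrm a2 u" by (rule Linf_nrm_nonneg[OF a2])
qed

lemma C_mem_measurable: "C_mem a2 v \<Longrightarrow> v \<in> borel_measurable (lebesgue_on {0<..<a2})"
  unfolding C_mem_def
  by (rule continuous_imp_measurable_on_sets_lebesgue) (auto elim: continuous_on_subset)

lemma Linf_mem_times:
  assumes a2: "0 < a2" and u: "Linf_mem a2 u" and v: "C_mem a2 v"
  shows "Linf_mem a2 (u * v)" "Linf_nrm a2 (u * v) \<le> Linf_nrm a2 u * C_nrm a2 v"
proof -
  have m: "u * v \<in> borel_measurable (lebesgue_on {0<..<a2})"
    unfolding times_fun_def using Linf_mem_measurable[OF u] C_mem_measurable[OF v] by simp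
  have b: "AE a in lebesgue_on {0<..<a2}. \<bar>(u * v) a\<bar> \<le> Linf_nrm a2 u * C_nrm a2 v"
    using Linf_nrm_AE_bound[OF a2 u] AE_space[of "lebesgue_on {0<..<a2}"]
  proof eventually_elim
    case (elim a)
    then have "\<bar>v a\<bar> \<le> C_nrm a2 v" using C_nrm_ge[OF v, of a] by auto
    then show ?case using elim by (auto simp: abs_mult intro!: mult_mono Linf_nrm_nonneg[OF a2])
  qed
  have c: "0 \<le> Linf_nrm a2 u * C_nrm a2 v" using Linf_nrm_nonneg[OF a2] C_nrm_nonneg[OF _ v] a2 by simp
  show "Linf_mem a2 (u * v)" "Linf_nrm a2 (u * v) \<le> Linf_nrm a2 u * C_nrm a2 v"
    using Linf_memI[OF a2 m b c] by (auto simp: times_fun_def)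
qed

lemma Ck_Linf_times:
  assumes a2: "0 < a2" and f: "Ck_Linf a2 k f" and g: "Ck_C a2 k g"
  shows "Ck_Linf a2 k (\<lambda>x. f x * g x)"
  using Ck_wrt_bilinear[of "Linf_mem a2" "Linf_nrm a2" "C_mem a2" "C_nrm a2" "Linf_mem a2" "Linf_nrm a2" "(*)" 1 k f g]
    seminormed_subspace_Linf[OF a2] seminormed_subspace_C[of a2] bilinear_times_fun Linf_mem_times[OF a2] a2 f g
  by simp

lemma Linf_AE_bound_Ioo:
  assumes a2: "0 < a2" and u: "Linf_mem a2 u" and b: "b \<le> a2"
  shows "AE a in lebesgue_on {0<..<b}. \<bar>u a\<bar> \<le> Linf_nrm a2 u"
proof -
  have "AE x in lebesgue. x \<in> {0<..<a2} \<longrightarrow> \<bar>u x\<bar> \<le> Linf_nrm a2 u"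
    using Linf_nrm_AE_bound[OF a2 u] by (subst (asm) AE_restrict_space_iff) auto
  then have "AE x in lebesgue. x \<in> {0<..<b} \<longrightarrow> \<bar>u x\<bar> \<le> Linf_nrm a2 u"
    by eventually_elim (use b in auto)
  then show ?thesis by (subst AE_restrict_space_iff) auto
qed

lemma Linf_integrable_Ioo:
  assumes a2: "0 < a2" and u: "Linf_mem a2 u" and b: "0 \<le> b" "b \<le> a2"
  shows "integrable (lebesgue_on {0<..<b}) u" "\<bar>integral\<^sup>L (lebesgue_on {0<..<b}) u\<bar> \<le> b * Linf_nrm a2 u"
proof -
  interpret finite_measure "lebesgue_on {0<..<b}" by (rule finite_measure_lebesgue_on_Ioo)
  have ae: "AE a in lebesgue_on {0<..<b}. \<bar>u a\<bar> \<le> Linf_nrm a2 u" by (rule Linf_AE_bound_Ioo[OF a2 u b(2)])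
  have m: "u \<in> borel_measurable (lebesgue_on {0<..<b})"
    by (rule measurable_restrict_mono[OF Linf_mem_measurable[OF u]]) (use b in auto)
  show i: "integrable (lebesgue_on {0<..<b}) u"
    by (rule integrable_const_bound[where B="Linf_nrm a2 u"]) (use ae m in auto)
  have "\<bar>integral\<^sup>L (lebesgue_on {0<..<b}) u\<bar> \<le> (\<integral>x. \<bar>u x\<bar> \<partial>lebesgue_on {0<..<b})"
    by (rule integral_abs_bound)
  also have "\<dots> \<le> (\<integral>x. Linf_nrm a2 u \<partial>lebesgue_on {0<..<b})"
    by (rule integral_mono_AE) (use i ae in auto)
  also have "\<dots> = b * Linf_nrm a2 u" using b(1) by (simp add: measure_restrict_space)
  finally show "\<bar>integral\<^sup>L (lebesgue_on {0<..<b}) u\<bar> \<le> b * Linf_nrm a2 u" .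
qed

lemma Linf_integral_Icc:
  assumes a2: "0 < a2" and u: "Linf_mem a2 u" and b: "0 \<le> b" "b \<le> a2"
  shows "u integrable_on {0..b}"
    and "(LINT s:{0..b}|lebesgue. u s) = integral\<^sup>L (lebesgue_on {0<..<b}) u"
    and "integral {0..b} u = integral\<^sup>L (lebesgue_on {0<..<b}) u"
proof -
  have i: "integrable (lebesgue_on {0<..<b}) u" by (rule Linf_integrable_Ioo[OF a2 u b])
  have m: "u \<in> borel_measurable (lebesgue_on {0<..<b})"
    by (rule measurable_restrict_mono[OF Linf_mem_measurable[OF u]]) (use b in auto)
  have "{0<..<b} \<in> sets lebesgue" by simp
  have "u absolutely_integrable_on {0<..<b}"
    unfolding absolutely_integrable_measurable[OF \<open>{0<..<b} \<in> sets lebesgue\<close>]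
    using m integrable_norm[OF i] by (simp add: o_def)
  then have si: "set_integrable lebesgue {0..b} u"
  proof (rule absolutely_integrable_spike_set)
    show "negligible {x \<in> {0<..<b} - {0..b}. u x \<noteq> 0}" by (rule negligible_subset[of "{}"]) auto
    show "negligible {x \<in> {0..b} - {0<..<b}. u x \<noteq> 0}" by (rule negligible_subset[of "{0, b}"]) auto
  qed
  show "u integrable_on {0..b}" by (rule set_lebesgue_integral_eq_integral(1)[OF si])
  show e: "integral {0..b} u = integral\<^sup>L (lebesgue_on {0<..<b}) u"
    using lebesgue_integral_eq_integral[OF i] integral_open_interval_real[of 0 b u] by simp
  show "(LINT s:{0..b}|lebesgue. u s) = integral\<^sup>L (lebesgue_on {0<..<b}) u"
    using set_lebesgue_integral_eq_integral(2)[OF si] e by simp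
qed

definition age_integral :: "real \<Rightarrow> (real \<Rightarrow> real) \<Rightarrow> real" where
  "age_integral a2 u = integral\<^sup>L (lebesgue_on {0<..<a2}) u"

lemma age_integral_bound: "0 < a2 \<Longrightarrow> Linf_mem a2 u \<Longrightarrow> \<bar>age_integral a2 u\<bar> \<le> a2 * Linf_nrm a2 u"
  unfolding age_integral_def using Linf_integrable_Ioo[of a2 u a2] by simp

lemma age_integral_eq_LINT:
  "0 < a2 \<Longrightarrow> Linf_mem a2 u \<Longrightarrow> (LINT a:{0..a2}|lebesgue. u a) = age_integral a2 u"
  unfolding age_integral_def using Linf_integral_Icc(2)[of a2 u a2] by simp

lemma linear_on_age_integral: assumes "0 < a2" shows "linear_on (Linf_mem a2) (age_integral a2)"
proof (rule linear_onI)
  fix u v assume "Linf_mem a2 u" "Linf_mem a2 v"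
  then show "age_integral a2 (u + v) = age_integral a2 u + age_integral a2 v"
    using Linf_integrable_Ioo[OF assms _ _ order_refl] assms
    unfolding age_integral_def plus_fun_def by simp
qed (simp add: age_integral_def scaleR_fun_def)

lemma Ck_real_age_integral:
  assumes "0 < a2" "Ck_Linf a2 k f"
  shows "Ck_real k (\<lambda>x. age_integral a2 (f x))"
  by (rule Ck_wrt_bounded_linear[OF seminormed_subspace_Linf[OF assms(1)] seminormed_subspace_real
        linear_on_age_integral[OF assms(1)], of a2]) (simp_all add: age_integral_bound assms)

lemma age_integral_times_bound:
  assumes a2: "0 < a2" and u: "Linf_mem a2 u" and v: "C_mem a2 v"
  shows "\<bar>age_integral a2 (u * v)\<bar> \<le> a2 * Linf_nrm a2 u * C_nrm a2 v"
proof -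
  have "\<bar>age_integral a2 (u * v)\<bar> \<le> a2 * Linf_nrm a2 (u * v)"
    by (rule age_integral_bound[OF a2 Linf_mem_times(1)[OF a2 u v]])
  also have "\<dots> \<le> a2 * (Linf_nrm a2 u * C_nrm a2 v)"
    using Linf_mem_times(2)[OF a2 u v] a2 by (intro mult_left_mono) auto
  finally show ?thesis by (simp add: mult.assoc)
qed

lemma age_integral_times_pos:
  assumes a2: "0 < a2" and u: "Linf_mem a2 u" and u_nonneg: "AE a in lebesgue_on {0<..<a2}. 0 \<le> u a"
    and u_nonzero: "\<not> (AE a in lebesgue_on {0<..<a2}. u a = 0)"
    and v: "C_mem a2 v" and v_pos: "\<And>a. a \<in> {0<..<a2} \<Longrightarrow> 0 < v a"
  shows "0 < age_integral a2 (u * v)"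
proof -
  have i: "integrable (lebesgue_on {0<..<a2}) (u * v)"
    using Linf_integrable_Ioo(1)[OF a2 Linf_mem_times(1)[OF a2 u v]] a2 by simp
  have ae: "AE a in lebesgue_on {0<..<a2}. 0 \<le> (u * v) a"
    using u_nonneg AE_space[of "lebesgue_on {0<..<a2}"] by eventually_elim (auto simp: v_pos less_imp_le)
  have "age_integral a2 (u * v) \<noteq> 0"
  proof
    assume "age_integral a2 (u * v) = 0"
    then have "AE a in lebesgue_on {0<..<a2}. (u * v) a = 0"
      using integral_nonneg_eq_0_iff_AE[OF i ae] unfolding age_integral_def by simp
    then have "AE a in lebesgue_on {0<..<a2}. u a = 0"
      using AE_space[of "lebesgue_on {0<..<a2}"] by eventually_elim (use v_pos in fastforce)
    then show False using u_nonzero by simp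
  qed
  moreover have "0 \<le> age_integral a2 (u * v)"
    unfolding age_integral_def using ae by (rule integral_nonneg_AE)
  ultimately show ?thesis by simp
qed

text \<open>The cut-off outside [0,a2], where integral {0..a} u is junk, makes the map linear on all
  of L-infinity(0,a2).\<close>

definition cumulative_integral :: "real \<Rightarrow> (real \<Rightarrow> real) \<Rightarrow> real \<Rightarrow> real" where
  "cumulative_integral a2 u a = (if a \<in> {0..a2} then integral {0..a} u else 0)"

lemma C_mem_cumulative_integral:
  assumes a2: "0 < a2" and u: "Linf_mem a2 u"
  shows "C_mem a2 (cumulative_integral a2 u)"
proof -
  have "continuous_on {0..a2} (\<lambda>a. integral {0..a} u)"
    by (rule indefinite_integral_continuous_1) (rule Linf_integral_Icc(1)[OF a2 u], use a2 in auto)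
  then show ?thesis unfolding C_mem_def cumulative_integral_def by (rule continuous_on_eq) auto
qed

lemma linear_on_cumulative_integral:
  assumes a2: "0 < a2" shows "linear_on (Linf_mem a2) (cumulative_integral a2)"
proof (rule linear_onI)
  fix u v assume u: "Linf_mem a2 u" and v: "Linf_mem a2 v"
  have "integral {0..a} (\<lambda>s. u s + v s) = integral {0..a} u + integral {0..a} v" if "a \<in> {0..a2}" for a
    by (rule integral_add) (use Linf_integral_Icc(1)[OF a2 u, of a] Linf_integral_Icc(1)[OF a2 v, of a] that in auto)
  then show "cumulative_integral a2 (u + v) = cumulative_integral a2 u + cumulative_integral a2 v"
    by (auto simp: fun_eq_iff cumulative_integral_def plus_fun_def)
qed (simp add: fun_eq_iff cumulative_integral_def scaleR_fun_def)

lemma C_nrm_cumulative_integral: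
  assumes a2: "0 < a2" and u: "Linf_mem a2 u"
  shows "C_nrm a2 (cumulative_integral a2 u) \<le> a2 * Linf_nrm a2 u"
proof (rule C_nrm_le)
  fix a assume a: "a \<in> {0..a2}"
  have "\<bar>cumulative_integral a2 u a\<bar> = \<bar>integral\<^sup>L (lebesgue_on {0<..<a}) u\<bar>"
    using a Linf_integral_Icc(3)[OF a2 u, of a] by (simp add: cumulative_integral_def)
  also have "\<dots> \<le> a * Linf_nrm a2 u" using Linf_integrable_Ioo(2)[OF a2 u, of a] a by auto
  also have "\<dots> \<le> a2 * Linf_nrm a2 u" using a Linf_nrm_nonneg[OF a2] by (intro mult_right_mono) auto
  finally show "\<bar>cumulative_integral a2 u a\<bar> \<le> a2 * Linf_nrm a2 u" .
qed (use a2 in simp)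

lemma Ck_C_cumulative_integral:
  assumes "0 < a2" "Ck_Linf a2 k f"
  shows "Ck_C a2 k (\<lambda>x. cumulative_integral a2 (f x))"
  by (rule Ck_wrt_bounded_linear[OF seminormed_subspace_Linf[OF assms(1)] seminormed_subspace_C
        linear_on_cumulative_integral[OF assms(1)], of a2])
    (use assms C_mem_cumulative_integral C_nrm_cumulative_integral in simp_all)

section \<open>The Laplace transform on (0,a2)\<close>

definition decay :: "real \<Rightarrow> real \<Rightarrow> real" where
  "decay r a = exp (- r * a)"

definition laplace :: "real \<Rightarrow> (real \<Rightarrow> real) \<Rightarrow> real \<Rightarrow> real" where
  "laplace a2 u r = age_integral a2 (u * decay r)"

lemma C_mem_decay: "C_mem a2 (decay r)"
  unfolding C_mem_def decay_def by (intro continuous_intros)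

lemma neg_mult_le_abs_mult: "0 \<le> a \<Longrightarrow> a \<le> a2 \<Longrightarrow> - (r * a) \<le> \<bar>r\<bar> * (a2::real)"
proof -
  assume "0 \<le> a" "a \<le> a2"
  have "- (r * a) \<le> \<bar>r * a\<bar>" by (rule abs_ge_minus_self)
  also have "\<dots> \<le> \<bar>r\<bar> * a2" using \<open>0 \<le> a\<close> \<open>a \<le> a2\<close> by (simp add: abs_mult mult_left_mono)
  finally show ?thesis .
qed

lemma C_nrm_decay: "0 \<le> a2 \<Longrightarrow> C_nrm a2 (decay r) \<le> exp (\<bar>r\<bar> * a2)"
  by (rule C_nrm_le) (auto simp: decay_def neg_mult_le_abs_mult)

lemma C_nrm_decay_taylor:
  assumes a2: "0 \<le> a2"
  shows "C_nrm a2 (decay s - decay r + (s - r) *\<^sub>R (\<lambda>a. a * decay r a))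
    \<le> exp (\<bar>r\<bar> * a2) * ((s - r)\<^sup>2 * a2\<^sup>2 * exp (\<bar>s - r\<bar> * a2))"
proof (rule C_nrm_le[OF a2])
  fix a assume a: "a \<in> {0..a2}"
  define d where "d = - ((s - r) * a)"
  have ad: "\<bar>d\<bar> \<le> \<bar>s - r\<bar> * a2" using a unfolding d_def by (auto simp: abs_mult intro: mult_left_mono)
  have "(decay s - decay r + (s - r) *\<^sub>R (\<lambda>a. a * decay r a)) a = exp (- r * a) * (exp d - 1 - d)"
    by (simp add: decay_def d_def algebra_simps flip: exp_add)
  then have "\<bar>(decay s - decay r + (s - r) *\<^sub>R (\<lambda>a. a * decay r a)) a\<bar> = exp (- r * a) * \<bar>exp d - 1 - d\<bar>"
    by (simp add: abs_mult)
  also have "\<dots> \<le> exp (\<bar>r\<bar> * a2) * (d\<^sup>2 * exp \<bar>d\<bar>)"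
    using a by (intro mult_mono abs_exp_minus_one_minus_le) (auto simp: neg_mult_le_abs_mult)
  also have "\<dots> \<le> exp (\<bar>r\<bar> * a2) * ((s - r)\<^sup>2 * a2\<^sup>2 * exp (\<bar>s - r\<bar> * a2))"
  proof -
    have "d\<^sup>2 \<le> (\<bar>s - r\<bar> * a2)\<^sup>2" using ad by (metis abs_ge_zero power2_abs power_mono)
    then have "d\<^sup>2 \<le> (s - r)\<^sup>2 * a2\<^sup>2" by (simp add: power_mult_distrib)
    moreover have "exp \<bar>d\<bar> \<le> exp (\<bar>s - r\<bar> * a2)" using ad by simp
    ultimately show ?thesis by (intro mult_left_mono mult_mono) auto
  qed
  finally show "\<bar>(decay s - decay r + (s - r) *\<^sub>R (\<lambda>a. a * decay r a)) a\<bar>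
      \<le> exp (\<bar>r\<bar> * a2) * ((s - r)\<^sup>2 * a2\<^sup>2 * exp (\<bar>s - r\<bar> * a2))" .
qed

context
  fixes a2 :: real
  assumes a2: "0 < a2"
begin

lemma linear_on_age_integral_times_left:
  assumes v: "C_mem a2 v" shows "linear_on (Linf_mem a2) (\<lambda>u. age_integral a2 (u * v))"
proof (rule linear_onI)
  fix u u' assume u: "Linf_mem a2 u" and u': "Linf_mem a2 u'"
  have "(u + u') * v = u * v + u' * v" by (simp add: fun_eq_iff algebra_simps)
  then show "age_integral a2 ((u + u') * v) = age_integral a2 (u * v) + age_integral a2 (u' * v)"
    using linear_on_add[OF linear_on_age_integral[OF a2], OF Linf_mem_times(1)[OF a2 u v]
        Linf_mem_times(1)[OF a2 u' v]] by simp
next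
  fix r u assume u: "Linf_mem a2 u"
  have "(r *\<^sub>R u) * v = r *\<^sub>R (u * v)" by (simp add: fun_eq_iff)
  then show "age_integral a2 ((r *\<^sub>R u) * v) = r *\<^sub>R age_integral a2 (u * v)"
    using linear_on_scaleR[OF linear_on_age_integral[OF a2], OF Linf_mem_times(1)[OF a2 u v]] by simp
qed

lemma linear_on_age_integral_times_right:
  assumes u: "Linf_mem a2 u" shows "linear_on (C_mem a2) (\<lambda>v. age_integral a2 (u * v))"
proof (rule linear_onI)
  fix v v' assume v: "C_mem a2 v" and v': "C_mem a2 v'"
  have "u * (v + v') = u * v + u * v'" by (simp add: fun_eq_iff algebra_simps)
  then show "age_integral a2 (u * (v + v')) = age_integral a2 (u * v) + age_integral a2 (u * v')"
    using linear_on_add[OF linear_on_age_integral[OF a2], OF Linf_mem_times(1)[OF a2 u v]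
        Linf_mem_times(1)[OF a2 u v']] by simp
next
  fix r v assume v: "C_mem a2 v"
  have "u * (r *\<^sub>R v) = r *\<^sub>R (u * v)" by (simp add: fun_eq_iff)
  then show "age_integral a2 (u * (r *\<^sub>R v)) = r *\<^sub>R age_integral a2 (u * v)"
    using linear_on_scaleR[OF linear_on_age_integral[OF a2], OF Linf_mem_times(1)[OF a2 u v]] by simp
qed

lemma laplace_diff:
  "Linf_mem a2 u \<Longrightarrow> Linf_mem a2 u' \<Longrightarrow> laplace a2 (u - u') r = laplace a2 u r - laplace a2 u' r"
  unfolding laplace_def
  by (rule linear_on_diff[OF seminormed_subspace_Linf[OF a2] linear_on_age_integral_times_left[OF C_mem_decay]])

lemma laplace_bound:
  assumes u: "Linf_mem a2 u"
  shows "\<bar>laplace a2 u r\<bar> \<le> a2 * Linf_nrm a2 u * exp (\<bar>r\<bar> * a2)"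
proof -
  have "\<bar>laplace a2 u r\<bar> \<le> a2 * Linf_nrm a2 u * C_nrm a2 (decay r)"
    unfolding laplace_def by (rule age_integral_times_bound[OF a2 u C_mem_decay])
  also have "\<dots> \<le> a2 * Linf_nrm a2 u * exp (\<bar>r\<bar> * a2)"
    using C_nrm_decay[of a2 r] a2 Linf_nrm_nonneg[OF a2] by (intro mult_left_mono) auto
  finally show ?thesis .
qed

lemma laplace_Lipschitz:
  assumes u: "Linf_mem a2 u" and u': "Linf_mem a2 u'"
  shows "\<bar>laplace a2 u r - laplace a2 u' r\<bar> \<le> a2 * Linf_nrm a2 (u - u') * exp (\<bar>r\<bar> * a2)"
  using laplace_bound[OF seminormed_diff[OF seminormed_subspace_Linf[OF a2], OF u u']] laplace_diff[OF u u'] by simp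

lemma laplace_strict_antimono:
  assumes u: "Linf_mem a2 u" and u_nonneg: "AE a in lebesgue_on {0<..<a2}. 0 \<le> u a"
    and u_nonzero: "\<not> (AE a in lebesgue_on {0<..<a2}. u a = 0)" and rs: "r < s"
  shows "laplace a2 u s < laplace a2 u r"
proof -
  have "0 < age_integral a2 (u * (decay r - decay s))"
    using rs by (intro age_integral_times_pos[OF a2 u u_nonneg u_nonzero] C_mem_diff C_mem_decay)
      (simp add: decay_def)
  then show ?thesis
    using linear_on_diff[OF seminormed_subspace_C[OF less_imp_le[OF a2]] linear_on_age_integral_times_right[OF u], OF C_mem_decay C_mem_decay]
    by (simp add: laplace_def)
qed

lemma laplace_antimono:
  assumes u: "Linf_mem a2 u" and u_nonneg: "AE a in lebesgue_on {0<..<a2}. 0 \<le> u a" and rs: "r \<le> s"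
  shows "laplace a2 u s \<le> laplace a2 u r"
proof (cases "AE a in lebesgue_on {0<..<a2}. u a = 0")
  case True
  then have "AE a in lebesgue_on {0<..<a2}. (u * decay t) a = 0" for t by eventually_elim simp
  then have "laplace a2 u t = 0" for t
    unfolding laplace_def age_integral_def by (rule integral_eq_zero_AE)
  then show ?thesis by simp
next
  case False
  then show ?thesis
    using laplace_strict_antimono[OF u u_nonneg False, of r s] rs by (cases "r = s") (auto simp: less_le)
qed

lemma laplace_moment_pos:
  assumes u: "Linf_mem a2 u" and u_nonneg: "AE a in lebesgue_on {0<..<a2}. 0 \<le> u a"
    and u_nonzero: "\<not> (AE a in lebesgue_on {0<..<a2}. u a = 0)"
  shows "0 < laplace a2 (\<lambda>a. a * u a) r"
proof -
  have "(\<lambda>a. a * u a) * decay r = u * (\<lambda>a. a * decay r a)" by (simp add: fun_eq_iff)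
  moreover have "C_mem a2 (\<lambda>a. a * decay r a)" unfolding C_mem_def decay_def by (intro continuous_intros)
  ultimately show ?thesis
    unfolding laplace_def by (auto intro!: age_integral_times_pos[OF a2 u u_nonneg u_nonzero] simp: decay_def)
qed

lemma laplace_has_real_derivative:
  assumes u: "Linf_mem a2 u"
  shows "(laplace a2 u has_real_derivative - laplace a2 (\<lambda>a. a * u a) r) (at r)"
proof -
  let ?D = "- laplace a2 (\<lambda>a. a * u a) r"
  let ?K = "a2 * Linf_nrm a2 u * exp (\<bar>r\<bar> * a2) * a2\<^sup>2"
  let ?v = "\<lambda>s. decay s - decay r + (s - r) *\<^sub>R (\<lambda>a. a * decay r a)"
  have T: "linear_on (C_mem a2) (\<lambda>v. age_integral a2 (u * v))"
    by (rule linear_on_age_integral_times_right[OF u])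
  note ss = seminormed_subspace_C[OF less_imp_le[OF a2]]
  have Cm: "C_mem a2 (\<lambda>a. a * decay r a)" unfolding C_mem_def decay_def by (intro continuous_intros)
  have moment: "(\<lambda>a. a * u a) * decay r = u * (\<lambda>a. a * decay r a)" by (simp add: fun_eq_iff)
  have eq: "laplace a2 u s - laplace a2 u r - (s - r) * ?D = age_integral a2 (u * ?v s)" for s
    using linear_on_add[OF T, OF seminormed_diff[OF ss, OF C_mem_decay C_mem_decay] seminormed_scaleR[OF ss, OF Cm]]
      linear_on_diff[OF ss T, OF C_mem_decay C_mem_decay] linear_on_scaleR[OF T, OF Cm]
    by (simp add: laplace_def moment)
  have bound: "\<bar>(laplace a2 u s - laplace a2 u r) / (s - r) - ?D\<bar> \<le> ?K * \<bar>s - r\<bar> * exp (\<bar>s - r\<bar> * a2)"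
    if "s \<noteq> r" for s
  proof -
    have Cv: "C_mem a2 (?v s)" by (intro seminormed_add[OF ss] seminormed_diff[OF ss] seminormed_scaleR[OF ss] C_mem_decay Cm)
    have "\<bar>laplace a2 u s - laplace a2 u r - (s - r) * ?D\<bar> \<le> a2 * Linf_nrm a2 u * C_nrm a2 (?v s)"
      unfolding eq by (rule age_integral_times_bound[OF a2 u Cv])
    also have "\<dots> \<le> a2 * Linf_nrm a2 u * (exp (\<bar>r\<bar> * a2) * ((s - r)\<^sup>2 * a2\<^sup>2 * exp (\<bar>s - r\<bar> * a2)))"
      using C_nrm_decay_taylor[of a2 s r] a2 Linf_nrm_nonneg[OF a2] by (intro mult_left_mono) auto
    finally have "\<bar>laplace a2 u s - laplace a2 u r - (s - r) * ?D\<bar> \<le> ?K * (s - r)\<^sup>2 * exp (\<bar>s - r\<bar> * a2)"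
      by (simp add: algebra_simps)
    moreover have "(laplace a2 u s - laplace a2 u r) / (s - r) - ?D
        = (laplace a2 u s - laplace a2 u r - (s - r) * ?D) / (s - r)"
      using that by (simp add: field_simps)
    ultimately show ?thesis
      using that by (simp add: abs_divide divide_le_eq power2_eq_square abs_mult_self_eq mult_ac)
  qed
  let ?B = "\<lambda>s. ?K * \<bar>s - r\<bar> * exp (\<bar>s - r\<bar> * a2)"
  have "(?B \<longlongrightarrow> ?K * \<bar>r - r\<bar> * exp (\<bar>r - r\<bar> * a2)) (at r)"
    by (intro tendsto_intros)
  then have lim: "(?B \<longlongrightarrow> 0) (at r)" by simp
  have upper: "\<forall>\<^sub>F s in at r. \<bar>(laplace a2 u s - laplace a2 u r) / (s - r) - ?D\<bar> \<le> ?B s"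
    using bound by (auto simp: eventually_at_filter)
  have "((\<lambda>s. \<bar>(laplace a2 u s - laplace a2 u r) / (s - r) - ?D\<bar>) \<longlongrightarrow> 0) (at r)"
    by (rule sandwich_zero[OF _ upper lim]) simp
  then have "((\<lambda>s. (laplace a2 u s - laplace a2 u r) / (s - r) - ?D) \<longlongrightarrow> 0) (at r)"
    by (rule tendsto_rabs_zero_cancel)
  then show ?thesis unfolding has_field_derivative_iff by (rule LIM_zero_cancel)
qed

lemma laplace_continuous: "Linf_mem a2 u \<Longrightarrow> isCont (laplace a2 u) r"
  using laplace_has_real_derivative by (rule DERIV_isCont)

end

lemma Ck_C_decay:
  assumes "0 \<le> a2" "Ck_real k g"
  shows "Ck_C a2 k (\<lambda>x. decay (g x))"
proof -
  have ss: "seminormed_subspace (C_mem a2) (C_nrm a2)" by (rule seminormed_subspace_C[OF assms(1)])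
  have "C_mem a2 (\<lambda>a. a)" by (simp add: C_mem_def continuous_on_id)
  then have "Ck_C a2 k (\<lambda>x. (- g x) *\<^sub>R (\<lambda>a. a))"
    by (intro Ck_wrt_scaleR[OF ss Ck_wrt_uminus[OF seminormed_subspace_real assms(2)]] Ck_wrt_const[OF ss])
  moreover have "decay r = (\<lambda>a. exp (- (r * a)))" for r by (simp add: fun_eq_iff decay_def)
  ultimately show ?thesis using Ck_C_exp[OF assms(1)] by (simp add: scaleR_fun_def)
qed

lemma Ck_real_laplace:
  assumes a2: "0 < a2" and f: "Ck_Linf a2 k f" and g: "Ck_real k g"
  shows "Ck_real k (\<lambda>x. laplace a2 (f x) (g x))"
  unfolding laplace_def using a2 f Ck_C_decay[OF _ g]
  by (intro Ck_real_age_integral Ck_Linf_times) auto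

section \<open>The implicitly defined growth rate\<close>

lemma has_derivative_of_increment:
  fixes \<alpha> :: "real^'n \<Rightarrow> real"
  assumes incr: "\<forall>\<^sub>F y in at x. (\<alpha> y - \<alpha> x) * q y = A y + (\<Sum>i\<in>UNIV. (y - x) $ i * J i y)"
    and q: "(q \<longlongrightarrow> c) (at x)" and c: "c \<noteq> 0"
    and J: "\<And>i. (J i \<longlongrightarrow> J i x) (at x)"
    and A: "((\<lambda>y. A y / norm (y - x)) \<longlongrightarrow> 0) (at x)"
  shows "(\<alpha> has_derivative (\<lambda>h. \<Sum>i\<in>UNIV. h $ i * (J i x / c))) (at x)"
proof -
  let ?R = "\<lambda>y. \<bar>deriv_remainder \<alpha> (\<lambda>i _. J i x / c) x y\<bar> / norm (y - x)"
  let ?U = "\<lambda>y. \<bar>A y / norm (y - x)\<bar> / \<bar>q y\<bar> + (\<Sum>i\<in>UNIV. \<bar>J i y / q y - J i x / c\<bar>)"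
  have "(?U \<longlongrightarrow> \<bar>0\<bar> / \<bar>c\<bar> + (\<Sum>i\<in>UNIV. \<bar>J i x / c - J i x / c\<bar>)) (at x)"
    using c by (intro tendsto_intros A q J) auto
  then have U: "(?U \<longlongrightarrow> 0) (at x)" by simp
  have "\<forall>\<^sub>F y in at x. q y \<noteq> 0" by (rule tendsto_imp_eventually_ne[OF q c])
  moreover have "\<forall>\<^sub>F y in at x. y \<noteq> x" by (simp add: eventually_at_filter)
  ultimately have "\<forall>\<^sub>F y in at x. ?R y \<le> ?U y"
    using incr
  proof eventually_elim
    case (elim y)
    let ?h = "y - x"
    let ?S = "\<Sum>i\<in>UNIV. ?h $ i * J i y"
    have "\<alpha> y - \<alpha> x = (A y + ?S) / q y" using elim(1,3) by (simp add: eq_divide_eq)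
    moreover have "?S / q y - (\<Sum>i\<in>UNIV. ?h $ i * (J i x / c)) = (\<Sum>i\<in>UNIV. ?h $ i * (J i y / q y - J i x / c))"
      by (simp add: right_diff_distrib sum_subtractf sum_divide_distrib)
    ultimately have "deriv_remainder \<alpha> (\<lambda>i _. J i x / c) x y
        = A y / q y + (\<Sum>i\<in>UNIV. ?h $ i * (J i y / q y - J i x / c))"
      by (simp add: deriv_remainder_def add_divide_distrib del: vector_minus_component)
    then have "\<bar>deriv_remainder \<alpha> (\<lambda>i _. J i x / c) x y\<bar>
        \<le> \<bar>A y\<bar> / \<bar>q y\<bar> + (\<Sum>i\<in>UNIV. \<bar>?h $ i\<bar> * \<bar>J i y / q y - J i x / c\<bar>)"
      by (auto simp: abs_mult intro!: order_trans[OF abs_triangle_ineq] add_mono order_trans[OF sum_abs])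
    also have "\<dots> \<le> \<bar>A y\<bar> / \<bar>q y\<bar> + norm ?h * (\<Sum>i\<in>UNIV. \<bar>J i y / q y - J i x / c\<bar>)"
      using component_le_norm_cart[of ?h]
      by (auto simp: sum_distrib_left intro!: sum_mono mult_right_mono simp del: vector_minus_component)
    finally show ?case
      using elim(2) by (simp add: divide_le_eq field_simps)
  qed
  then have "(?R \<longlongrightarrow> 0) (at x)"
    by (rule sandwich_zero[rotated, OF _ U]) simp
  then show ?thesis by (simp add: deriv_remainder_real_iff_has_derivative)
qed

context
  fixes a2 :: real and p :: "real^'n \<Rightarrow> real \<Rightarrow> real" and \<alpha> :: "real^'n \<Rightarrow> real"
  assumes a2: "0 < a2"
    and p_mem: "\<And>x. Linf_mem a2 (p x)"
    and p_nonneg: "\<And>x. AE a in lebesgue_on {0<..<a2}. 0 \<le> p x a"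
    and laplace_eq_1: "\<And>x. laplace a2 (p x) (\<alpha> x) = 1"
begin

lemma laplace_root_density_nonzero: "\<not> (AE a in lebesgue_on {0<..<a2}. p x a = 0)"
proof
  assume "AE a in lebesgue_on {0<..<a2}. p x a = 0"
  then have "AE a in lebesgue_on {0<..<a2}. (p x * decay (\<alpha> x)) a = 0" by eventually_elim simp
  then have "laplace a2 (p x) (\<alpha> x) = 0"
    unfolding laplace_def age_integral_def by (rule integral_eq_zero_AE)
  then show False using laplace_eq_1[of x] by simp
qed

text \<open>Since the Laplace transform is strictly decreasing in r and Lipschitz in the density,
  an L-infinity-small perturbation of p cannot move the root of laplace = 1 by e or more.\<close>

lemma laplace_root_isCont:
  assumes p_cont: "((\<lambda>y. Linf_nrm a2 (p y - p x)) \<longlongrightarrow> 0) (at x)"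
  shows "isCont \<alpha> x"
  unfolding isCont_def
proof (rule tendstoI)
  fix e :: real assume e: "0 < e"
  have g1: "laplace a2 (p x) (\<alpha> x + e) < 1"
    using laplace_strict_antimono[OF a2 p_mem p_nonneg laplace_root_density_nonzero[of x], of "\<alpha> x" "\<alpha> x + e"] e laplace_eq_1[of x] by simp
  have g2: "1 < laplace a2 (p x) (\<alpha> x - e)"
    using laplace_strict_antimono[OF a2 p_mem p_nonneg laplace_root_density_nonzero[of x], of "\<alpha> x - e" "\<alpha> x"] e laplace_eq_1[of x] by simp
  have lim: "((\<lambda>y. a2 * Linf_nrm a2 (p y - p x) * exp (\<bar>r\<bar> * a2)) \<longlongrightarrow> 0) (at x)" for r
    using tendsto_mult[OF tendsto_mult[OF tendsto_const p_cont] tendsto_const, of a2 "exp (\<bar>r\<bar> * a2)"] by simp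
  have "\<forall>\<^sub>F y in at x. a2 * Linf_nrm a2 (p y - p x) * exp (\<bar>\<alpha> x + e\<bar> * a2) < 1 - laplace a2 (p x) (\<alpha> x + e)"
    by (rule order_tendstoD(2)[OF lim]) (use g1 in simp)
  moreover have "\<forall>\<^sub>F y in at x. a2 * Linf_nrm a2 (p y - p x) * exp (\<bar>\<alpha> x - e\<bar> * a2) < laplace a2 (p x) (\<alpha> x - e) - 1"
    by (rule order_tendstoD(2)[OF lim]) (use g2 in simp)
  ultimately show "\<forall>\<^sub>F y in at x. dist (\<alpha> y) (\<alpha> x) < e"
  proof eventually_elim
    case (elim y)
    have "\<alpha> y < \<alpha> x + e"
    proof (rule ccontr)
      assume "\<not> \<alpha> y < \<alpha> x + e"
      then have "laplace a2 (p y) (\<alpha> y) \<le> laplace a2 (p y) (\<alpha> x + e)" by (intro laplace_antimono[OF a2 p_mem p_nonneg]) simp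
      moreover have "laplace a2 (p y) (\<alpha> x + e) < 1"
        using laplace_Lipschitz[OF a2 p_mem[of y] p_mem[of x], of "\<alpha> x + e"] elim(1) by linarith
      ultimately show False using laplace_eq_1[of y] by simp
    qed
    moreover have "\<alpha> x - e < \<alpha> y"
    proof (rule ccontr)
      assume "\<not> \<alpha> x - e < \<alpha> y"
      then have "laplace a2 (p y) (\<alpha> x - e) \<le> laplace a2 (p y) (\<alpha> y)" by (intro laplace_antimono[OF a2 p_mem p_nonneg]) simp
      moreover have "1 < laplace a2 (p y) (\<alpha> x - e)"
        using laplace_Lipschitz[OF a2 p_mem[of y] p_mem[of x], of "\<alpha> x - e"] elim(2) by linarith
      ultimately show False using laplace_eq_1[of y] by simp
    qed
    ultimately show ?case by (simp add: dist_real_def abs_less_iff)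
  qed
qed

lemma laplace_root_has_derivative:
  assumes Dp_mem: "\<And>i. Linf_mem a2 (Dp i x)"
    and p_diff: "((\<lambda>y. Linf_nrm a2 (deriv_remainder p Dp x y) / norm (y - x)) \<longlongrightarrow> 0) (at x)"
    and cont: "isCont \<alpha> x"
  shows "(\<alpha> has_derivative
    (\<lambda>h. \<Sum>i\<in>UNIV. h $ i * (laplace a2 (Dp i x) (\<alpha> x) / laplace a2 (\<lambda>a. a * p x a) (\<alpha> x)))) (at x)"
proof -
  let ?M = "laplace a2 (\<lambda>a. a * p x a) (\<alpha> x)"
  let ?R = "deriv_remainder p Dp x"
  have ssL: "seminormed_subspace (Linf_mem a2) (Linf_nrm a2)" by (rule seminormed_subspace_Linf[OF a2])
  have M: "0 < ?M" by (rule laplace_moment_pos[OF a2 p_mem p_nonneg laplace_root_density_nonzero])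
  \<comment> \<open>With the Caratheodory slope g of laplace a2 (p x) at alpha x, the equations
    laplace a2 (p x) (alpha x) = 1 = laplace a2 (p y) (alpha y) turn into
    (alpha y - alpha x) * (- g (alpha y)) = laplace a2 (p y - p x) (alpha y).\<close>
  obtain g where g: "\<And>z. laplace a2 (p x) z - laplace a2 (p x) (\<alpha> x) = g z * (z - \<alpha> x)"
    "isCont g (\<alpha> x)" "g (\<alpha> x) = - ?M"
    using laplace_has_real_derivative[OF a2 p_mem, of x "\<alpha> x"] unfolding CARAT_DERIV by blast
  show ?thesis
  proof (rule has_derivative_of_increment[where q = "\<lambda>y. - g (\<alpha> y)" and A = "\<lambda>y. laplace a2 (?R y) (\<alpha> y)"
        and J = "\<lambda>i y. laplace a2 (Dp i x) (\<alpha> y)"])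
    show "\<forall>\<^sub>F y in at x. (\<alpha> y - \<alpha> x) * - g (\<alpha> y)
        = laplace a2 (?R y) (\<alpha> y) + (\<Sum>i\<in>UNIV. (y - x) $ i * laplace a2 (Dp i x) (\<alpha> y))"
    proof (intro always_eventually allI)
      fix y
      have T: "linear_on (Linf_mem a2) (\<lambda>u. laplace a2 u (\<alpha> y))"
        unfolding laplace_def by (rule linear_on_age_integral_times_left[OF a2 C_mem_decay])
      have "laplace a2 (?R y) (\<alpha> y) = laplace a2 (p y) (\<alpha> y) - laplace a2 (p x) (\<alpha> y)
          - (\<Sum>i\<in>UNIV. (y - x) $ i * laplace a2 (Dp i x) (\<alpha> y))"
        using deriv_remainder_linear_on[of "Linf_mem a2" "Linf_nrm a2" "\<lambda>u. laplace a2 u (\<alpha> y)" p Dp x y,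
            OF ssL T p_mem Dp_mem]
        by (simp add: deriv_remainder_def del: vector_minus_component)
      then show "(\<alpha> y - \<alpha> x) * - g (\<alpha> y)
          = laplace a2 (?R y) (\<alpha> y) + (\<Sum>i\<in>UNIV. (y - x) $ i * laplace a2 (Dp i x) (\<alpha> y))"
        using g(1)[of "\<alpha> y"] laplace_eq_1[of x] laplace_eq_1[of y] by (simp add: algebra_simps)
    qed
    have "((\<lambda>y. g (\<alpha> y)) \<longlongrightarrow> g (\<alpha> x)) (at x)"
      by (rule isCont_tendsto_compose[OF g(2) cont[unfolded isCont_def]])
    then show "((\<lambda>y. - g (\<alpha> y)) \<longlongrightarrow> ?M) (at x)"
      using g(3) tendsto_minus by fastforce
    show "?M \<noteq> 0" using M by simp
    show "((\<lambda>y. laplace a2 (Dp i x) (\<alpha> y)) \<longlongrightarrow> laplace a2 (Dp i x) (\<alpha> x)) (at x)" for i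
      by (rule isCont_tendsto_compose[OF laplace_continuous[OF a2 Dp_mem] cont[unfolded isCont_def]])
    let ?B = "\<lambda>y. a2 * (Linf_nrm a2 (?R y) / norm (y - x)) * exp (\<bar>\<alpha> y\<bar> * a2)"
    have "(?B \<longlongrightarrow> a2 * 0 * exp (\<bar>\<alpha> x\<bar> * a2)) (at x)"
      using cont unfolding isCont_def by (intro tendsto_intros p_diff)
    then have lim: "(?B \<longlongrightarrow> 0) (at x)" by simp
    have "\<bar>laplace a2 (?R y) (\<alpha> y) / norm (y - x)\<bar> \<le> ?B y" for y
      using divide_right_mono[OF laplace_bound[OF a2 deriv_remainder_mem[of _ _ p y x Dp, OF ssL p_mem p_mem Dp_mem]],
          of "norm (y - x)"]
      by (simp add: abs_divide)
    then have "((\<lambda>y. \<bar>laplace a2 (?R y) (\<alpha> y) / norm (y - x)\<bar>) \<longlongrightarrow> 0) (at x)"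
      by (intro sandwich_zero[OF _ _ lim]) simp_all
    then show "((\<lambda>y. laplace a2 (?R y) (\<alpha> y) / norm (y - x)) \<longlongrightarrow> 0) (at x)"
      by (rule tendsto_rabs_zero_cancel)
  qed
qed

lemma laplace_root_Ck_Suc:
  assumes p_Ck: "Ck_Linf a2 (Suc j) p" and alpha_Ck: "Ck_real j \<alpha>"
  shows "Ck_real (Suc j) \<alpha>"
proof -
  have ssL: "seminormed_subspace (Linf_mem a2) (Linf_nrm a2)" by (rule seminormed_subspace_Linf[OF a2])
  have ssC: "seminormed_subspace (C_mem a2) (C_nrm a2)" using seminormed_subspace_C a2 by simp
  have cont: "isCont \<alpha> x" for x by (rule laplace_root_isCont[OF Ck_wrt_continuous[OF ssL p_Ck]])
  from p_Ck[unfolded Ck_wrt_Suc_iff] obtain Dp where Dp: "\<forall>i x. Linf_mem a2 (Dp i x)"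
    "\<forall>x. ((\<lambda>y. Linf_nrm a2 (deriv_remainder p Dp x y) / norm (y - x)) \<longlongrightarrow> 0) (at x)"
    "\<forall>i. Ck_Linf a2 j (Dp i)" by blast
  have num: "Ck_real j (\<lambda>x. laplace a2 (Dp i x) (\<alpha> x))" for i
    using Dp(3) by (intro Ck_real_laplace[OF a2 _ alpha_Ck]) simp
  have "Ck_Linf a2 j (\<lambda>x. p x * (\<lambda>a. a))"
    by (intro Ck_Linf_times[OF a2 Ck_wrt_Suc_imp[OF ssL p_Ck]] Ck_wrt_const[OF ssC])
      (simp add: C_mem_def continuous_on_id)
  moreover have "p x * (\<lambda>a. a) = (\<lambda>a. a * p x a)" for x by (simp add: fun_eq_iff)
  ultimately have den: "Ck_real j (\<lambda>x. laplace a2 (\<lambda>a. a * p x a) (\<alpha> x))"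
    using Ck_real_laplace[OF a2 _ alpha_Ck] by simp
  have den_ne: "\<forall>x. laplace a2 (\<lambda>a. a * p x a) (\<alpha> x) \<noteq> 0"
    using laplace_moment_pos[OF a2 p_mem p_nonneg laplace_root_density_nonzero] by (metis less_irrefl)
  show ?thesis unfolding Ck_real_Suc_iff
  proof (intro exI[of _ "\<lambda>i x. laplace a2 (Dp i x) (\<alpha> x) / laplace a2 (\<lambda>a. a * p x a) (\<alpha> x)"] conjI allI)
    fix x
    show "(\<alpha> has_derivative (\<lambda>h. \<Sum>i\<in>UNIV. h $ i *
        (laplace a2 (Dp i x) (\<alpha> x) / laplace a2 (\<lambda>a. a * p x a) (\<alpha> x)))) (at x)"
      using Dp cont by (intro laplace_root_has_derivative) auto
  next
    fix i
    show "Ck_real j (\<lambda>x. laplace a2 (Dp i x) (\<alpha> x) / laplace a2 (\<lambda>a. a * p x a) (\<alpha> x))"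
      using Ck_real_mult[OF num Ck_real_inverse[OF den den_ne]] by (simp add: divide_inverse)
  qed
qed

lemma laplace_root_Ck:
  assumes p_Ck: "Ck_Linf a2 k p"
  shows "Ck_real k \<alpha>"
proof -
  have ssL: "seminormed_subspace (Linf_mem a2) (Linf_nrm a2)" by (rule seminormed_subspace_Linf[OF a2])
  have "Ck_real j \<alpha>" if "j \<le> k" for j
    using that
  proof (induction j)
    case 0
    show ?case unfolding Ck_real_0_iff
      using laplace_root_isCont[OF Ck_wrt_continuous[OF ssL p_Ck]] by blast
  next
    case (Suc j)
    then show ?case by (intro laplace_root_Ck_Suc Ck_wrt_mono[OF ssL p_Ck]) simp_all
  qed
  then show ?thesis by simp
qed

end

section \<open>Regularity of the principal eigenpair\<close>

lemma surv_eq_exp_cumulative_integral: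
  assumes "0 < a2" "Linf_mem a2 (mu x)" "a \<in> {0..a2}"
  shows "surv mu 0 a x = exp (- cumulative_integral a2 (mu x) a)"
  using Linf_integral_Icc(2,3)[OF assms(1,2), of a] assms(3)
  by (simp add: surv_def cumulative_integral_def)

lemma laplace_eq_set_integral:
  assumes "0 < a2" "Linf_mem a2 u"
  shows "laplace a2 u r = (LINT a:{0..a2}|lebesgue. u a * exp (- r * a))"
  using age_integral_eq_LINT[OF assms(1) Linf_mem_times(1)[OF assms C_mem_decay]]
  by (simp add: laplace_def decay_def)

lemma Ck_C_exp_neg_cumulative_integral:
  assumes "0 < a2" "Ck_Linf a2 k mu"
  shows "Ck_C a2 k (\<lambda>x a. exp (- cumulative_integral a2 (mu x) a))"
  using Ck_C_exp[OF _ Ck_wrt_uminus[OF seminormed_subspace_C Ck_C_cumulative_integral[OF assms]]] assms(1)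
  by simp

theorem mainTheorem20:
  fixes k :: nat and a2 :: real
    and mu beta :: "real^'n \<Rightarrow> real \<Rightarrow> real"
    and beta_low :: "real \<Rightarrow> real"
    and alpha :: "real^'n \<Rightarrow> real"
    and phi :: "real^'n \<Rightarrow> real \<Rightarrow> real"
  assumes a2_pos: "a2 > 0"
    and mu_pos: "\<forall>x. Linf_plus a2 (mu x)"
    and beta_pos: "\<forall>x. Linf_plus a2 (beta x)"
    and mu_Ck: "Ck_wrt (Linf_mem a2) (Linf_nrm a2) k mu"
    and beta_Ck: "Ck_wrt (Linf_mem a2) (Linf_nrm a2) k beta"
    and beta_low_meas: "beta_low \<in> borel_measurable (lebesgue_on {0<..<a2})"
    and beta_low_le: "\<forall>x. AE a in lebesgue_on {0<..<a2}. beta_low a \<le> beta x a"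
    and beta_low_nonzero: "\<not> (AE a in lebesgue_on {0<..<a2}. beta_low a = 0)"
    and alpha_eq: "\<forall>x. (LINT a:{0..a2}|lebesgue. beta x a * exp (- alpha x * a) * surv mu 0 a x) = 1"
    and phi_def: "\<forall>x a. phi x a = exp (- alpha x * a) * surv mu 0 a x"
  shows "Ck_wrt (CR_mem a2) (CR_nrm a2) k (\<lambda>x. (phi x, alpha x))"
proof -
  \<comment> \<open>mu_pos and the beta_low hypotheses only guarantee that alpha exists; here alpha is given by
    alpha_eq, which also yields the nondegeneracy of beta w used below.\<close>
  define w where "w x = (\<lambda>a. exp (- cumulative_integral a2 (mu x) a))" for x
  define p where "p x = beta x * w x" for x
  have w_Ck: "Ck_C a2 k w" unfolding w_def by (rule Ck_C_exp_neg_cumulative_integral[OF a2_pos mu_Ck])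
  have p_Ck: "Ck_Linf a2 k p" unfolding p_def by (rule Ck_Linf_times[OF a2_pos beta_Ck w_Ck])
  have surv: "surv mu 0 a x = w x a" if "a \<in> {0..a2}" for a x
    using surv_eq_exp_cumulative_integral[OF a2_pos Ck_wrt_mem[OF mu_Ck] that] by (simp add: w_def)
  have p_nonneg: "AE a in lebesgue_on {0<..<a2}. 0 \<le> p x a" for x
    using beta_pos[rule_format, of x] unfolding Linf_plus_def
    by (auto elim!: eventually_mono simp: p_def w_def)
  have "(LINT a:{0..a2}|lebesgue. beta x a * exp (- alpha x * a) * surv mu 0 a x)
      = laplace a2 (p x) (alpha x)" for x
    unfolding laplace_eq_set_integral[OF a2_pos Ck_wrt_mem[OF p_Ck]]
    by (rule set_lebesgue_integral_cong) (auto simp: surv p_def)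
  then have alpha_Ck: "Ck_real k alpha"
    using laplace_root_Ck[OF a2_pos Ck_wrt_mem[OF p_Ck] p_nonneg _ p_Ck] alpha_eq by simp
  have "Ck_C a2 k (\<lambda>x. decay (alpha x) * w x)"
    using Ck_C_times[OF _ Ck_C_decay[OF _ alpha_Ck] w_Ck] a2_pos by simp
  then have "Ck_C a2 k phi"
    by (rule Ck_C_cong[rotated]) (simp add: phi_def decay_def surv)
  then show ?thesis using Ck_CR_Pair[OF _ _ alpha_Ck] a2_pos by simp
qed

end
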